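(* Let $n\ge2$, $m\ge2$ be integers, let $\mathcal{V}=\mathcal{V}_1\otimes\dots\otimes\mathcal{V}_m$ be a tensor product of vector spaces over a field $\mathbb{F}$, and let $\{x_a : a\in[n]\}$ be a multiset of product tensors with $x_a=x_{a,1}\otimes\dots\otimes x_{a,m}$. For $S\subseteq[n]$ and $j\in[m]$ let $d_j^S=\dim\operatorname{span}\{x_{a,j}:a\in S\}$. If for every subset $S \subseteq [n]$ with $2\leq |S| \leq n$ it holds that $|S| \leq\sum_{j=1}^m (d_j^S-1)$, then the set of product tensors lying in $\operatorname{span}\{x_a : a \in [n]\}$ equals $\mathbb{F}^\times x_1 \sqcup \dots \sqcup \mathbb{F}^\times x_n$ (i.e., every product tensor in this span is a non-zero scalar multiple of some $x_a$).
   Context: $[n]=\{1,\dots,n\}$. A product tensor is a non-zero tensor $z_1\otimes\dots\otimes z_m$, $z_j\in\mathcal{V}_j$. $\mathbb{F}^\times$ denotes the non-zero scalars. *)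

theory Defs
  imports "HOL-Analysis.Analysis" "HOL-Library.Function_Algebras"
begin

definition fscale :: "'f::field \<Rightarrow> ('a \<Rightarrow> 'f) \<Rightarrow> ('a \<Rightarrow> 'f)" where
  "fscale c v = (\<lambda>x. c * v x)"

lemma vector_space_fscale: "vector_space (fscale :: 'f::field \<Rightarrow> ('a \<Rightarrow> 'f) \<Rightarrow> _)"
  by unfold_locales (auto simp: fscale_def algebra_simps fun_eq_iff)

abbreviation fspan :: "('a \<Rightarrow> 'f::field) set \<Rightarrow> ('a \<Rightarrow> 'f) set" where
  "fspan \<equiv> module.span fscale"

abbreviation fdim :: "('a \<Rightarrow> 'f::field) set \<Rightarrow> nat" where
  "fdim \<equiv> vector_space.dim fscale"

text \<open>The product tensor \<open>z 1 \<otimes> \<dots> \<otimes> z m\<close> with factors \<open>z j :: 'i \<Rightarrow> 'f\<close>, realised as a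
  function on multi-indices \<open>\<iota> :: nat \<Rightarrow> 'i\<close> (only \<open>\<iota> 1, \<dots>, \<iota> m\<close> matter).\<close>
definition ptensor :: "nat \<Rightarrow> (nat \<Rightarrow> 'i \<Rightarrow> 'f::field) \<Rightarrow> ((nat \<Rightarrow> 'i) \<Rightarrow> 'f)" where
  "ptensor m z = (\<lambda>\<iota>. \<Prod>j\<in>{1..m}. z j (\<iota> j))"

definition is_product_tensor :: "nat \<Rightarrow> ((nat \<Rightarrow> 'i) \<Rightarrow> 'f::field) \<Rightarrow> bool" where
  "is_product_tensor m t \<longleftrightarrow> t \<noteq> 0 \<and> (\<exists>z. t = ptensor m z)"

end

theory Submission
  imports Defs
begin

text \<open>
  The key is a lower bound for span-connected families of non-zero product tensors (no proper
  subfamily spans a direct summand of the span of the whole family): they span a space of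
  dimension at least \<open>1 + (\<Sum>j. d\<^sub>j - 1)\<close>, where \<open>d\<^sub>j\<close> is the dimension spanned by the
  \<open>j\<close>-th factors. Grouping the first \<open>m\<close> factors reduces this to two factors \<open>u\<^sub>a \<otimes> w\<^sub>a\<close>,
  where it is proved by induction on the family. Connectedness puts one member \<open>u\<^sub>e \<otimes> w\<^sub>e\<close>
  into the span of the others; split into connected components, the others contribute a
  non-zero summand from each component, and a sum of \<open>k\<close> such summands that is itself of rank
  one forces \<open>k - 1\<close> linear relations among the factors: after reducing the \<open>u\<close>-factors of
  every summand to a basis, all the matching \<open>w\<close>-factors are multiples of \<open>w\<^sub>e\<close>.

  If a product tensor \<open>t\<close> lies in the span and \<open>S\<close> is minimal with \<open>t\<close> in the span of the
  \<open>x\<^sub>a\<close>, \<open>a \<in> S\<close>, then \<open>t\<close> together with these \<open>x\<^sub>a\<close> is span-connected and spans a space of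
  dimension at most \<open>|S|\<close>. Hence \<open>|S| > (\<Sum>j. d\<^sub>j\<^sup>S - 1)\<close>, and the hypothesis forces
  \<open>|S| = 1\<close>. The same bound applied to \<open>{x\<^sub>a, x\<^sub>b}\<close> with \<open>x\<^sub>a\<close> parallel to \<open>x\<^sub>b\<close> shows that
  the sets of multiples are disjoint.
\<close>

section \<open>Dimension of finite families of functions\<close>

interpretation fs: vector_space "fscale :: 'f::field \<Rightarrow> ('a \<Rightarrow> 'f) \<Rightarrow> ('a \<Rightarrow> 'f)"
  by (rule vector_space_fscale)

lemma fscale_apply: "fscale c v x = c * v x"
  by (simp add: fscale_def)

lemma sum_fun_apply: "(\<Sum>a\<in>A. f a) x = (\<Sum>a\<in>A. f a x)"
  by (induction A rule: infinite_finite_induct) auto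

lemma fbasis_exists:
  fixes S :: "('a \<Rightarrow> 'f::field) set"
  assumes "finite S"
  obtains B where "B \<subseteq> S" "finite B" "fs.independent B" "S \<subseteq> fspan B" "card B = fdim S"
  using fs.basis_exists[of S] assms by (metis finite_subset)

lemma fdim_empty [simp]: "fdim ({} :: ('a \<Rightarrow> 'f::field) set) = 0"
  using fs.dim_le_card'[of "{} :: ('a \<Rightarrow> 'f) set"] by simp

lemma fdim_singleton:
  fixes x :: "'a \<Rightarrow> 'f::field"
  assumes "x \<noteq> 0"
  shows "fdim {x} = 1"
  using fs.dim_eq_card_independent[of "{x}"] assms by simp

lemma fdim_mono:
  fixes S T :: "('a \<Rightarrow> 'f::field) set"
  assumes "finite T" "S \<subseteq> fspan T"
  shows "fdim S \<le> fdim T"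
proof -
  obtain B where B: "finite B" "T \<subseteq> fspan B" "card B = fdim T"
    using fbasis_exists[OF assms(1)] by metis
  have "S \<subseteq> fspan B"
    using assms(2) fs.span_mono[OF B(2)] by (simp add: fs.span_span)
  then show ?thesis
    using fs.dim_le_card[OF _ B(1)] B(3) by simp
qed

lemma fdim_subset:
  fixes S T :: "('a \<Rightarrow> 'f::field) set"
  assumes "finite T" "S \<subseteq> T"
  shows "fdim S \<le> fdim T"
  using fdim_mono[OF assms(1)] assms(2) fs.span_superset by blast

lemma fdim_ge_1:
  fixes S :: "('a \<Rightarrow> 'f::field) set"
  assumes "finite S" "x \<in> S" "x \<noteq> 0"
  shows "1 \<le> fdim S"
  using fdim_subset[OF assms(1), of "{x}"] assms(2) fdim_singleton[OF assms(3)] by simp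

lemma fdim_insert_in_span:
  fixes S :: "('a \<Rightarrow> 'f::field) set"
  assumes "x \<in> fspan S"
  shows "fdim (insert x S) = fdim S"
  using fs.span_eq_dim[OF fs.span_redundant[OF assms]] .

lemma fdim_Un_le:
  fixes S T :: "('a \<Rightarrow> 'f::field) set"
  assumes "finite S" "finite T"
  shows "fdim (S \<union> T) \<le> fdim S + fdim T"
proof -
  obtain B where B: "finite B" "S \<subseteq> fspan B" "card B = fdim S"
    using fbasis_exists[OF assms(1)] by metis
  obtain C where C: "finite C" "T \<subseteq> fspan C" "card C = fdim T"
    using fbasis_exists[OF assms(2)] by metis
  have "S \<union> T \<subseteq> fspan (B \<union> C)"
    using B(2) C(2) fs.span_mono[of B "B \<union> C"] fs.span_mono[of C "B \<union> C"] by blast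
  then have "fdim (S \<union> T) \<le> card (B \<union> C)"
    using fs.dim_le_card B(1) C(1) by blast
  also have "\<dots> \<le> card B + card C"
    by (rule card_Un_le)
  finally show ?thesis
    using B(3) C(3) by simp
qed

lemma independent_Un_if_fspan_Int_zero:
  fixes B C :: "('a \<Rightarrow> 'f::field) set"
  assumes "finite C" "fs.independent B" "fs.independent C" "fspan B \<inter> fspan C = {0}"
  shows "fs.independent (B \<union> C)"
  using assms(1,3,4)
proof (induction C rule: finite_induct)
  case empty
  then show ?case
    using assms(2) by simp
next
  case (insert c C)
  have c: "c \<notin> fspan C" and indep_C: "fs.independent C"
    using insert.prems(1) insert.hyps(2) fs.independent_insert[of c C] by simp_all
  have "fspan B \<inter> fspan C = {0}"
    using insert.prems(2) fs.span_mono[of C "insert c C"] fs.span_zero by blast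
  then have indep: "fs.independent (B \<union> C)"
    using insert.IH indep_C by blast
  have "c \<notin> fspan (B \<union> C)"
  proof
    assume "c \<in> fspan (B \<union> C)"
    then obtain x y where xy: "c = x + y" "x \<in> fspan B" "y \<in> fspan C"
      by (auto simp: fs.span_Un)
    have "y \<in> fspan (insert c C)"
      using xy(3) fs.span_mono[of C "insert c C"] by blast
    then have "c - y \<in> fspan (insert c C)"
      by (rule fs.span_diff[OF fs.span_base[OF insertI1]])
    then have "x \<in> fspan (insert c C)"
      using xy(1) by simp
    then have "x = 0"
      using insert.prems(2) xy(2) by blast
    then show False
      using xy c by simp
  qed
  then show ?case
    using fs.independent_insertI[OF _ indep] by simp
qed

lemma fdim_Un_if_fspan_Int_zero:
  fixes S T :: "('a \<Rightarrow> 'f::field) set"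
  assumes "finite S" "finite T" "fspan S \<inter> fspan T = {0}"
  shows "fdim (S \<union> T) = fdim S + fdim T"
proof -
  obtain B where B: "B \<subseteq> S" "finite B" "fs.independent B" "S \<subseteq> fspan B" "card B = fdim S"
    using fbasis_exists[OF assms(1)] by metis
  obtain C where C: "C \<subseteq> T" "finite C" "fs.independent C" "T \<subseteq> fspan C" "card C = fdim T"
    using fbasis_exists[OF assms(2)] by metis
  have BC: "fspan B \<inter> fspan C = {0}"
    using assms(3) fs.span_mono[OF B(1)] fs.span_mono[OF C(1)] fs.span_zero by blast
  have disj: "B \<inter> C = {}"
  proof (rule ccontr)
    assume "B \<inter> C \<noteq> {}"
    then obtain v where v: "v \<in> B" "v \<in> C"
      by blast
    then have "v = 0"
      using BC fs.span_base[OF v(1)] fs.span_base[OF v(2)] by blast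
    then show False
      using v(1) B(3) fs.dependent_zero by metis
  qed
  have "fspan (S \<union> T) = fspan (B \<union> C)"
    unfolding fs.span_eq
  proof
    show "S \<union> T \<subseteq> fspan (B \<union> C)"
      using B(4) C(4) fs.span_mono[of B "B \<union> C"] fs.span_mono[of C "B \<union> C"] by blast
    show "B \<union> C \<subseteq> fspan (S \<union> T)"
      using B(1) C(1) fs.span_superset[of "S \<union> T"] by blast
  qed
  then have "fdim (S \<union> T) = card (B \<union> C)"
    using fs.span_eq_dim fs.dim_eq_card_independent
      independent_Un_if_fspan_Int_zero[OF C(2) B(3) C(3) BC] by metis
  also have "\<dots> = card B + card C"
    using card_Un_disjoint[OF B(2) C(2) disj] .
  finally show ?thesis
    using B(5) C(5) by simp
qed

lemma fdim_Un_replace_le: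
  fixes X G H :: "('a \<Rightarrow> 'f::field) set"
  assumes "finite X" "finite G" "finite H" "H \<subseteq> fspan G"
  shows "fdim (X \<union> G) + fdim H \<le> fdim (X \<union> H) + fdim G"
proof -
  obtain B where B: "B \<subseteq> H" "finite B" "fs.independent B" "card B = fdim H"
    using fbasis_exists[OF assms(3)] by metis
  have "B \<subseteq> fspan G"
    using B(1) assms(4) by (rule subset_trans)
  then obtain C where C: "B \<subseteq> C" "C \<subseteq> fspan G" "fs.independent C" "fspan G \<subseteq> fspan C"
    by (rule fs.maximal_independent_subset_extend[OF _ B(3)])
  have fin_C: "finite C"
    using fs.independent_span_bound[OF assms(2) C(3,2)] by blast
  have card_C: "card C = fdim G"
    using fs.basis_card_eq_dim[OF C(2,4,3)] by simp
  have "C \<subseteq> fspan (X \<union> H \<union> (C - B))"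
    using B(1) fs.span_superset[of "X \<union> H \<union> (C - B)"] by blast
  then have "fspan C \<subseteq> fspan (X \<union> H \<union> (C - B))"
    by (rule fs.span_minimal[OF _ fs.subspace_span])
  then have "X \<union> G \<subseteq> fspan (X \<union> H \<union> (C - B))"
    using C(4) fs.span_superset[of G] fs.span_superset[of "X \<union> H \<union> (C - B)"] by blast
  then have "fdim (X \<union> G) \<le> fdim (X \<union> H \<union> (C - B))"
    using fdim_mono assms(1,3) fin_C by (metis finite_Diff finite_UnI)
  also have "\<dots> \<le> fdim (X \<union> H) + card (C - B)"
    using fdim_Un_le[of "X \<union> H" "C - B"] fs.dim_le_card'[of "C - B"] assms(1,3) fin_C by simp
  also have "card (C - B) = card C - card B"
    using card_Diff_subset[OF B(2) C(1)] .
  finally show ?thesis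
    using card_C B(4) card_mono[OF fin_C C(1)] by linarith
qed

lemma fdim_UN_replace_le:
  fixes G H :: "'p \<Rightarrow> ('a \<Rightarrow> 'f::field) set"
  assumes "finite \<P>" "\<forall>P\<in>\<P>. finite (G P) \<and> finite (H P) \<and> H P \<subseteq> fspan (G P)" "finite X"
  shows "fdim (X \<union> (\<Union>P\<in>\<P>. G P)) + (\<Sum>P\<in>\<P>. fdim (H P))
       \<le> fdim (X \<union> (\<Union>P\<in>\<P>. H P)) + (\<Sum>P\<in>\<P>. fdim (G P))"
  using assms
proof (induction \<P> arbitrary: X rule: finite_induct)
  case empty
  then show ?case
    by simp
next
  case (insert P \<P>)
  have P: "finite (G P)" "finite (H P)" "H P \<subseteq> fspan (G P)"
    using insert.prems(1) by auto
  have fin: "finite (\<Union>Q\<in>\<P>. G Q)" "finite (\<Union>Q\<in>\<P>. H Q)"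
    using insert.prems(1) insert.hyps(1) by auto
  have "fdim ((X \<union> (\<Union>Q\<in>\<P>. G Q)) \<union> G P) + fdim (H P)
      \<le> fdim ((X \<union> H P) \<union> (\<Union>Q\<in>\<P>. G Q)) + fdim (G P)"
    using fdim_Un_replace_le[of "X \<union> (\<Union>Q\<in>\<P>. G Q)" "G P" "H P"] P fin insert.prems(2)
    by (simp add: Un_ac)
  moreover have "fdim ((X \<union> H P) \<union> (\<Union>Q\<in>\<P>. G Q)) + (\<Sum>Q\<in>\<P>. fdim (H Q))
      \<le> fdim ((X \<union> H P) \<union> (\<Union>Q\<in>\<P>. H Q)) + (\<Sum>Q\<in>\<P>. fdim (G Q))"
    using insert.IH[of "X \<union> H P"] insert.prems P by simp
  ultimately show ?case
    using insert.hyps by (simp add: Un_ac)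
qed

lemma fspan_image_sum:
  fixes g :: "'e \<Rightarrow> ('a \<Rightarrow> 'f::field)"
  assumes "finite A" "t \<in> fspan (g ` A)"
  obtains c where "t = (\<Sum>a\<in>A. fscale (c a) (g a))"
  using assms
proof (induction A arbitrary: t thesis rule: finite_induct)
  case empty
  then show ?case
    by (metis fs.span_empty image_empty singletonD sum.empty)
next
  case (insert a A)
  obtain k where "t - fscale k (g a) \<in> fspan (g ` A)"
    using insert.prems(2) fs.span_breakdown_eq[of t "g a" "g ` A"] by auto
  then obtain c where c: "t - fscale k (g a) = (\<Sum>b\<in>A. fscale (c b) (g b))"
    using insert.IH by blast
  have "(\<Sum>b\<in>A. fscale ((c(a := k)) b) (g b)) = (\<Sum>b\<in>A. fscale (c b) (g b))"
    using insert.hyps(2) by (intro sum.cong) auto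
  then have "t = (\<Sum>b\<in>insert a A. fscale ((c(a := k)) b) (g b))"
    using insert.hyps c by (simp add: algebra_simps)
  then show ?case
    by (rule insert.prems(1))
qed

lemma fspan_image_sum_in:
  fixes g :: "'e \<Rightarrow> ('a \<Rightarrow> 'f::field)"
  shows "(\<Sum>a\<in>A. fscale (c a) (g a)) \<in> fspan (g ` A)"
  by (intro fs.span_sum fs.span_scale fs.span_base) auto

lemma fspan_image_UN_eq:
  fixes u :: "'e \<Rightarrow> ('a \<Rightarrow> 'f::field)"
  assumes "\<forall>P\<in>\<P>. fspan (u ` J P) = fspan (u ` P)"
  shows "fspan (u ` (\<Union>P\<in>\<P>. J P)) = fspan (u ` \<Union>\<P>)"
  unfolding fs.span_eq
proof
  show "u ` (\<Union>P\<in>\<P>. J P) \<subseteq> fspan (u ` \<Union>\<P>)"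
  proof
    fix v assume "v \<in> u ` (\<Union>P\<in>\<P>. J P)"
    then obtain P where P: "P \<in> \<P>" "v \<in> u ` J P"
      by blast
    then have "v \<in> fspan (u ` P)"
      using fs.span_base[OF P(2)] assms by simp
    moreover have "fspan (u ` P) \<subseteq> fspan (u ` \<Union>\<P>)"
      using P(1) by (intro fs.span_mono image_mono) blast
    ultimately show "v \<in> fspan (u ` \<Union>\<P>)"
      by blast
  qed
  show "u ` \<Union>\<P> \<subseteq> fspan (u ` (\<Union>P\<in>\<P>. J P))"
  proof
    fix v assume "v \<in> u ` \<Union>\<P>"
    then obtain P where P: "P \<in> \<P>" "v \<in> u ` P"
      by blast
    then have "v \<in> fspan (u ` J P)"
      using fs.span_base[OF P(2)] assms by simp
    moreover have "fspan (u ` J P) \<subseteq> fspan (u ` (\<Union>P\<in>\<P>. J P))"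
      using P(1) by (intro fs.span_mono image_mono) blast
    ultimately show "v \<in> fspan (u ` (\<Union>P\<in>\<P>. J P))"
      by blast
  qed
qed

lemma minimal_fspan_subset_exists:
  fixes g :: "'e \<Rightarrow> ('a \<Rightarrow> 'f::field)"
  assumes "finite N" "t \<in> fspan (g ` N)"
  obtains S where "S \<subseteq> N" "t \<in> fspan (g ` S)" "\<forall>S'\<subset>S. t \<notin> fspan (g ` S')"
proof -
  obtain S where S: "S \<subseteq> N" "t \<in> fspan (g ` S)"
    and least: "\<forall>S'. S' \<subseteq> N \<and> t \<in> fspan (g ` S') \<longrightarrow> card S \<le> card S'"
    using ex_has_least_nat[of "\<lambda>S. S \<subseteq> N \<and> t \<in> fspan (g ` S)" N card] assms(2) by blast
  have "finite S"
    using S(1) assms(1) by (rule finite_subset)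
  have "\<forall>S'\<subset>S. t \<notin> fspan (g ` S')"
  proof (intro allI impI notI)
    fix S' assume "S' \<subset> S" "t \<in> fspan (g ` S')"
    then have "card S \<le> card S'" "card S' < card S"
      using least S(1) psubset_card_mono[OF \<open>finite S\<close>] by auto
    then show False
      by simp
  qed
  then show thesis
    using that S by blast
qed

lemma coeffs_unique_if_independent:
  fixes \<alpha> :: "'e \<Rightarrow> ('a \<Rightarrow> 'f::field)"
  assumes "finite J" "inj_on \<alpha> J" "fs.independent (\<alpha> ` J)"
    and "(\<Sum>j\<in>J. fscale (c j) (\<alpha> j)) = (\<Sum>j\<in>J. fscale (d j) (\<alpha> j))" "j \<in> J"
  shows "c j = d j"
proof -
  define e where "e v = c (the_inv_into J \<alpha> v) - d (the_inv_into J \<alpha> v)" for v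
  have "(\<Sum>v\<in>\<alpha> ` J. fscale (e v) v) = (\<Sum>j\<in>J. fscale (c j - d j) (\<alpha> j))"
    using assms(2) by (simp add: sum.reindex e_def the_inv_into_f_f)
  also have "\<dots> = 0"
    using assms(4) by (simp add: fun_eq_iff sum_fun_apply fscale_apply algebra_simps sum_subtractf)
  finally have "e (\<alpha> j) = 0"
    using fs.independentD[OF assms(3)] assms(1,5) by blast
  then show ?thesis
    using assms(2,5) by (simp add: e_def the_inv_into_f_f)
qed

lemma fscale_inverse_cancel:
  fixes v :: "'a \<Rightarrow> 'f::field"
  assumes "k \<noteq> 0"
  shows "fscale (inverse k) (fscale k v) = v"
  using assms by (simp add: fun_eq_iff fscale_apply)

lemma in_fspan_singleton_if_fscale_eq:
  fixes v w :: "'a \<Rightarrow> 'f::field"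
  assumes "fscale c v = fscale c' w" "c \<noteq> 0"
  shows "v \<in> fspan {w}"
proof -
  have "v = fscale (inverse c * c') w"
    using arg_cong[OF assms(1), of "fscale (inverse c)"] assms(2) by (simp add: fun_eq_iff fscale_apply)
  then show ?thesis
    unfolding fs.span_singleton by blast
qed

lemma fdim_image_linear_inj:
  fixes h :: "('a \<Rightarrow> 'f::field) \<Rightarrow> ('b \<Rightarrow> 'f)"
  assumes "Vector_Spaces.linear fscale fscale h" "inj_on h (fspan S)" "finite S"
  shows "fdim (h ` S) = fdim S"
proof -
  interpret h: Vector_Spaces.linear fscale fscale h
    by (rule assms(1))
  obtain B where B: "B \<subseteq> S" "finite B" "fs.independent B" "S \<subseteq> fspan B" "card B = fdim S"
    using fbasis_exists[OF assms(3)] by metis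
  have span_B: "fspan B = fspan S"
    unfolding fs.span_eq using B(1,4) fs.span_superset[of S] by blast
  then have inj_B: "inj_on h (fspan B)"
    using assms(2) by simp
  have "fdim (h ` S) = fdim (h ` B)"
    by (rule fs.span_eq_dim) (simp add: h.span_image span_B)
  also have "\<dots> = card (h ` B)"
    using fs.dim_eq_card_independent[OF h.independent_injective_image[OF B(3) inj_B]] .
  also have "\<dots> = card B"
    using card_image[OF inj_on_subset[OF inj_B fs.span_superset]] .
  finally show ?thesis
    using B(5) by simp
qed

section \<open>Rank-one tensors\<close>

definition outer :: "('c \<Rightarrow> 'f::field) \<Rightarrow> ('d \<Rightarrow> 'f) \<Rightarrow> ('c \<times> 'd \<Rightarrow> 'f)" where
  "outer u w = (\<lambda>(p, q). u p * w q)"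

lemma outer_apply [simp]: "outer u w (p, q) = u p * w q"
  by (simp add: outer_def)

lemma outer_eq_0_iff: "outer u w = 0 \<longleftrightarrow> u = 0 \<or> w = 0"
proof
  assume "outer u w = 0"
  then have "u p * w q = 0" for p q
    by (metis outer_apply zero_fun_def)
  then show "u = 0 \<or> w = 0"
    by (auto simp: fun_eq_iff)
qed (auto simp: fun_eq_iff)

lemma outer_zero_right [simp]: "outer u 0 = 0"
  by (auto simp: fun_eq_iff)

lemma outer_fscale_left: "outer (fscale c u) w = fscale c (outer u w)"
  by (auto simp: fun_eq_iff fscale_apply)

lemma outer_fscale_right: "outer u (fscale c w) = fscale c (outer u w)"
  by (auto simp: fun_eq_iff fscale_apply)

lemma outer_add_right: "outer u (w + w') = outer u w + outer u w'"
  by (auto simp: fun_eq_iff algebra_simps)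

lemma outer_sum_left: "outer (\<Sum>i\<in>I. g i) w = (\<Sum>i\<in>I. outer (g i) w)"
  by (auto simp: fun_eq_iff sum_fun_apply sum_distrib_right)

lemma outer_sum_right: "outer u (\<Sum>i\<in>I. g i) = (\<Sum>i\<in>I. outer u (g i))"
  by (auto simp: fun_eq_iff sum_fun_apply sum_distrib_left)

definition column_at :: "'d \<Rightarrow> ('c \<times> 'd \<Rightarrow> 'f) \<Rightarrow> ('c \<Rightarrow> 'f)" where
  "column_at q t = (\<lambda>p. t (p, q))"

definition row_at :: "'c \<Rightarrow> ('c \<times> 'd \<Rightarrow> 'f) \<Rightarrow> ('d \<Rightarrow> 'f)" where
  "row_at p t = (\<lambda>q. t (p, q))"

lemma linear_column_at: "Vector_Spaces.linear fscale fscale (column_at q :: ('c \<times> 'd \<Rightarrow> 'f::field) \<Rightarrow> _)"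
  unfolding Vector_Spaces.linear_iff by (auto simp: vector_space_fscale column_at_def fscale_def)

lemma linear_row_at: "Vector_Spaces.linear fscale fscale (row_at p :: ('c \<times> 'd \<Rightarrow> 'f::field) \<Rightarrow> _)"
  unfolding Vector_Spaces.linear_iff by (auto simp: vector_space_fscale row_at_def fscale_def)

lemma column_at_outer: "column_at q (outer a b) = fscale (b q) a"
  by (simp add: column_at_def fun_eq_iff fscale_apply mult.commute)

lemma row_at_outer: "row_at p (outer a b) = fscale (a p) b"
  by (simp add: row_at_def fun_eq_iff fscale_apply)

lemma column_at_in_fspan:
  fixes u :: "'e \<Rightarrow> 'c \<Rightarrow> 'f::field" and w :: "'e \<Rightarrow> 'd \<Rightarrow> 'f"
  assumes "t \<in> fspan ((\<lambda>i. outer (u i) (w i)) ` I)"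
  shows "column_at q t \<in> fspan (u ` I)"
proof -
  interpret L: Vector_Spaces.linear fscale fscale "column_at q :: ('c \<times> 'd \<Rightarrow> 'f) \<Rightarrow> _"
    by (rule linear_column_at)
  have "column_at q t \<in> fspan (column_at q ` (\<lambda>i. outer (u i) (w i)) ` I)"
    using assms by (simp add: L.span_image)
  moreover have "column_at q ` (\<lambda>i. outer (u i) (w i)) ` I \<subseteq> fspan (u ` I)"
    by (auto simp: column_at_outer intro!: fs.span_scale fs.span_base[OF imageI])
  ultimately show ?thesis
    using fs.span_minimal[OF _ fs.subspace_span] by blast
qed

lemma row_at_in_fspan:
  fixes u :: "'e \<Rightarrow> 'c \<Rightarrow> 'f::field" and w :: "'e \<Rightarrow> 'd \<Rightarrow> 'f"
  assumes "t \<in> fspan ((\<lambda>i. outer (u i) (w i)) ` I)"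
  shows "row_at p t \<in> fspan (w ` I)"
proof -
  interpret L: Vector_Spaces.linear fscale fscale "row_at p :: ('c \<times> 'd \<Rightarrow> 'f) \<Rightarrow> _"
    by (rule linear_row_at)
  have "row_at p t \<in> fspan (row_at p ` (\<lambda>i. outer (u i) (w i)) ` I)"
    using assms by (simp add: L.span_image)
  moreover have "row_at p ` (\<lambda>i. outer (u i) (w i)) ` I \<subseteq> fspan (w ` I)"
    by (auto simp: row_at_outer intro!: fs.span_scale fs.span_base[OF imageI])
  ultimately show ?thesis
    using fs.span_minimal[OF _ fs.subspace_span] by blast
qed

lemma left_in_fspan_if_outer_in_fspan:
  fixes u :: "'e \<Rightarrow> 'c \<Rightarrow> 'f::field" and w :: "'e \<Rightarrow> 'd \<Rightarrow> 'f"
  assumes "outer a b \<in> fspan ((\<lambda>i. outer (u i) (w i)) ` I)" "b \<noteq> 0"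
  shows "a \<in> fspan (u ` I)"
proof -
  obtain q where q: "b q \<noteq> 0"
    using assms(2) by (auto simp: fun_eq_iff)
  have "fscale (b q) a \<in> fspan (u ` I)"
    using column_at_in_fspan[OF assms(1), of q] by (simp add: column_at_outer)
  then show ?thesis
    using fs.span_scale[of _ _ "inverse (b q)"] fscale_inverse_cancel[OF q] by metis
qed

lemma right_in_fspan_if_outer_in_fspan:
  fixes u :: "'e \<Rightarrow> 'c \<Rightarrow> 'f::field" and w :: "'e \<Rightarrow> 'd \<Rightarrow> 'f"
  assumes "outer a b \<in> fspan ((\<lambda>i. outer (u i) (w i)) ` I)" "a \<noteq> 0"
  shows "b \<in> fspan (w ` I)"
proof -
  obtain p where p: "a p \<noteq> 0"
    using assms(2) by (auto simp: fun_eq_iff)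
  have "fscale (a p) b \<in> fspan (w ` I)"
    using row_at_in_fspan[OF assms(1), of p] by (simp add: row_at_outer)
  then show ?thesis
    using fs.span_scale[of _ _ "inverse (a p)"] fscale_inverse_cancel[OF p] by metis
qed

lemma sum_outer_expand_left:
  fixes \<alpha> \<alpha>' :: "'e \<Rightarrow> 'c \<Rightarrow> 'f::field" and \<beta> :: "'e \<Rightarrow> 'd \<Rightarrow> 'f"
  assumes "\<forall>i\<in>I. \<alpha> i = (\<Sum>j\<in>J. fscale (\<gamma> i j) (\<alpha>' j))"
  shows "(\<Sum>i\<in>I. outer (\<alpha> i) (\<beta> i)) = (\<Sum>j\<in>J. outer (\<alpha>' j) (\<Sum>i\<in>I. fscale (\<gamma> i j) (\<beta> i)))"
proof -
  have "outer (\<alpha> i) (\<beta> i) = (\<Sum>j\<in>J. outer (\<alpha>' j) (fscale (\<gamma> i j) (\<beta> i)))" if "i \<in> I" for i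
  proof -
    have "\<alpha> i = (\<Sum>j\<in>J. fscale (\<gamma> i j) (\<alpha>' j))"
      using assms that by blast
    then have "outer (\<alpha> i) (\<beta> i) = outer (\<Sum>j\<in>J. fscale (\<gamma> i j) (\<alpha>' j)) (\<beta> i)"
      by (rule arg_cong)
    then show ?thesis
      by (simp add: outer_sum_left outer_fscale_left outer_fscale_right)
  qed
  then have "(\<Sum>i\<in>I. outer (\<alpha> i) (\<beta> i)) = (\<Sum>i\<in>I. \<Sum>j\<in>J. outer (\<alpha>' j) (fscale (\<gamma> i j) (\<beta> i)))"
    by (intro sum.cong) auto
  also have "\<dots> = (\<Sum>j\<in>J. outer (\<alpha>' j) (\<Sum>i\<in>I. fscale (\<gamma> i j) (\<beta> i)))"
    by (simp add: sum.swap[of _ I] outer_sum_right)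
  finally show ?thesis .
qed

lemma outer_sum_reduce_to_basis:
  fixes \<alpha> :: "'e \<Rightarrow> 'c \<Rightarrow> 'f::field" and \<beta> :: "'e \<Rightarrow> 'd \<Rightarrow> 'f"
  assumes "finite I"
  obtains J \<beta>' where "J \<subseteq> I" "inj_on \<alpha> J" "fs.independent (\<alpha> ` J)"
    "fspan (\<alpha> ` J) = fspan (\<alpha> ` I)"
    "(\<Sum>i\<in>I. outer (\<alpha> i) (\<beta> i)) = (\<Sum>j\<in>J. outer (\<alpha> j) (\<beta>' j))"
    "\<forall>j\<in>J. \<beta>' j - \<beta> j \<in> fspan (\<beta> ` (I - J))"
proof -
  obtain B where B: "B \<subseteq> \<alpha> ` I" "fs.independent B" "\<alpha> ` I \<subseteq> fspan B"
    by (rule fs.basis_exists)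
  obtain J where J: "J \<subseteq> I" "inj_on \<alpha> J" "B = \<alpha> ` J"
    using subset_image_inj[of B \<alpha> I] B(1) by blast
  have fin_J: "finite J"
    using J(1) assms by (rule finite_subset)
  have span_\<alpha>I: "\<alpha> ` I \<subseteq> fspan (\<alpha> ` J)"
    using B(3) unfolding J(3) .
  have "\<alpha> ` J \<subseteq> \<alpha> ` I"
    using J(1) by (rule image_mono)
  then have span_J: "fspan (\<alpha> ` J) = fspan (\<alpha> ` I)"
    unfolding fs.span_eq using fs.span_superset[of "\<alpha> ` I"] span_\<alpha>I by blast
  have ex_\<gamma>: "\<forall>i\<in>I - J. \<exists>\<gamma>. \<alpha> i = (\<Sum>j\<in>J. fscale (\<gamma> j) (\<alpha> j))"
  proof
    fix i assume "i \<in> I - J"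
    then have "\<alpha> i \<in> fspan (\<alpha> ` J)"
      using span_\<alpha>I by blast
    then show "\<exists>\<gamma>. \<alpha> i = (\<Sum>j\<in>J. fscale (\<gamma> j) (\<alpha> j))"
      by (rule fspan_image_sum[OF fin_J]) blast
  qed
  obtain \<gamma> where \<gamma>: "\<forall>i\<in>I - J. \<alpha> i = (\<Sum>j\<in>J. fscale (\<gamma> i j) (\<alpha> j))"
    using bchoice[OF ex_\<gamma>] by blast
  define \<beta>' where "\<beta>' j = \<beta> j + (\<Sum>i\<in>I - J. fscale (\<gamma> i j) (\<beta> i))" for j
  note rest = sum_outer_expand_left[OF \<gamma>, of \<beta>]
  have "(\<Sum>i\<in>I. outer (\<alpha> i) (\<beta> i))
      = (\<Sum>j\<in>J. outer (\<alpha> j) (\<beta> j)) + (\<Sum>i\<in>I - J. outer (\<alpha> i) (\<beta> i))"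
    using sum.subset_diff[OF J(1) assms] by (simp add: add.commute)
  also have "\<dots> = (\<Sum>j\<in>J. outer (\<alpha> j) (\<beta>' j))"
    unfolding rest \<beta>'_def outer_add_right sum.distrib ..
  finally have sum_eq: "(\<Sum>i\<in>I. outer (\<alpha> i) (\<beta> i)) = (\<Sum>j\<in>J. outer (\<alpha> j) (\<beta>' j))" .
  have "\<forall>j\<in>J. \<beta>' j - \<beta> j \<in> fspan (\<beta> ` (I - J))"
    by (simp add: \<beta>'_def fspan_image_sum_in)
  moreover have "fs.independent (\<alpha> ` J)"
    using B(2) unfolding J(3) .
  ultimately show thesis
    using that[OF J(1,2) _ span_J sum_eq] by blast
qed

lemma right_factors_multiple_if_outer_sum_eq_outer:
  fixes \<alpha> :: "'e \<Rightarrow> 'c \<Rightarrow> 'f::field" and \<beta> :: "'e \<Rightarrow> 'd \<Rightarrow> 'f"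
  assumes "finite J" "inj_on \<alpha> J" "fs.independent (\<alpha> ` J)"
    and "(\<Sum>j\<in>J. outer (\<alpha> j) (\<beta> j)) = outer a b"
  obtains \<kappa> where "\<forall>j\<in>J. \<beta> j = fscale (\<kappa> j) b"
proof -
  have column_eq: "(\<Sum>j\<in>J. fscale (\<beta> j q) (\<alpha> j)) = fscale (b q) a" for q
    using arg_cong[OF assms(4), of "column_at q"]
    by (simp add: column_at_def fun_eq_iff sum_fun_apply fscale_apply mult.commute)
  \<comment> \<open>Column \<open>q\<close> of \<open>outer a b\<close> is \<open>b q\<close> times \<open>a\<close>, so its \<open>\<alpha>\<close>-coordinates are \<open>b q\<close> times fixed ones.\<close>
  obtain \<kappa> where \<kappa>: "\<And>q. (\<Sum>j\<in>J. fscale (\<beta> j q) (\<alpha> j)) = (\<Sum>j\<in>J. fscale (b q * \<kappa> j) (\<alpha> j))"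
  proof (cases "b = 0")
    case True
    show ?thesis
      using that[of "\<lambda>_. 0"] column_eq True by (simp add: fun_eq_iff fscale_apply)
  next
    case False
    then obtain q0 where q0: "b q0 \<noteq> 0"
      by (auto simp: fun_eq_iff)
    have "(\<Sum>j\<in>J. fscale (b q * (\<beta> j q0 / b q0)) (\<alpha> j))
        = fscale (b q / b q0) (\<Sum>j\<in>J. fscale (\<beta> j q0) (\<alpha> j))" for q
      by (simp add: fun_eq_iff sum_fun_apply fscale_apply sum_distrib_left mult_ac)
    then show ?thesis
      using that[of "\<lambda>j. \<beta> j q0 / b q0"] column_eq q0 by (simp add: fun_eq_iff fscale_apply)
  qed
  show thesis
  proof (rule that, intro ballI)
    fix j assume "j \<in> J"
    show "\<beta> j = fscale (\<kappa> j) b"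
      using coeffs_unique_if_independent[OF assms(1-3) \<kappa> \<open>j \<in> J\<close>]
      by (simp add: fun_eq_iff fscale_apply mult.commute)
  qed
qed

lemma fdim_le_if_outer_sum_eq_outer:
  fixes \<alpha> :: "'e \<Rightarrow> 'c \<Rightarrow> 'f::field" and \<beta> :: "'e \<Rightarrow> 'd \<Rightarrow> 'f"
  assumes "finite I" "(\<Sum>i\<in>I. outer (\<alpha> i) (\<beta> i)) = outer a b"
  shows "fdim (\<alpha> ` I) + fdim (\<beta> ` I) \<le> card I + 1"
proof -
  obtain J \<beta>' where J: "J \<subseteq> I" "inj_on \<alpha> J" "fs.independent (\<alpha> ` J)"
      "fspan (\<alpha> ` J) = fspan (\<alpha> ` I)"
    and sum_eq_I: "(\<Sum>i\<in>I. outer (\<alpha> i) (\<beta> i)) = (\<Sum>j\<in>J. outer (\<alpha> j) (\<beta>' j))"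
    and diff: "\<forall>j\<in>J. \<beta>' j - \<beta> j \<in> fspan (\<beta> ` (I - J))"
    by (rule outer_sum_reduce_to_basis[OF assms(1)])
  have sum_eq: "(\<Sum>j\<in>J. outer (\<alpha> j) (\<beta>' j)) = outer a b"
    using sum_eq_I assms(2) by simp
  have fin_J: "finite J"
    using J(1) assms(1) finite_subset by blast
  obtain \<kappa> where \<beta>'_eq: "\<forall>j\<in>J. \<beta>' j = fscale (\<kappa> j) b"
    by (rule right_factors_multiple_if_outer_sum_eq_outer[OF fin_J J(2,3) sum_eq])
  have "\<beta> ` I \<subseteq> fspan (insert b (\<beta> ` (I - J)))"
  proof
    fix v assume "v \<in> \<beta> ` I"
    then obtain i where i: "i \<in> I" "v = \<beta> i"
      by blast
    show "v \<in> fspan (insert b (\<beta> ` (I - J)))"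
    proof (cases "i \<in> J")
      case True
      have "\<beta>' i \<in> fspan (insert b (\<beta> ` (I - J)))"
        unfolding \<beta>'_eq[rule_format, OF True] by (intro fs.span_scale fs.span_base) simp
      moreover have "\<beta>' i - \<beta> i \<in> fspan (insert b (\<beta> ` (I - J)))"
        using diff True fs.span_mono[of "\<beta> ` (I - J)"] by blast
      ultimately have "\<beta>' i - (\<beta>' i - \<beta> i) \<in> fspan (insert b (\<beta> ` (I - J)))"
        by (rule fs.span_diff)
      then show ?thesis
        using i(2) by simp
    next
      case False
      then show ?thesis
        using i by (intro fs.span_base) simp
    qed
  qed
  then have "fdim (\<beta> ` I) \<le> card (insert b (\<beta> ` (I - J)))"
    using fs.dim_le_card assms(1) by blast
  also have "\<dots> \<le> card (I - J) + 1"
    using card_image_le[of "I - J" \<beta>] assms(1) by (simp add: card_insert_if)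
  finally have dim_\<beta>: "fdim (\<beta> ` I) \<le> card (I - J) + 1" .
  have "fdim (\<alpha> ` I) = card J"
    using fs.span_eq_dim[OF J(4)] fs.dim_eq_card_independent[OF J(3)] card_image[OF J(2)] by simp
  moreover have "card J + card (I - J) = card I"
    using card_Diff_subset[OF fin_J J(1)] card_mono[OF assms(1) J(1)] by simp
  ultimately show ?thesis
    using dim_\<beta> by linarith
qed

lemma outer_span_rep_basis:
  fixes u :: "'e \<Rightarrow> 'c \<Rightarrow> 'f::field" and w :: "'e \<Rightarrow> 'd \<Rightarrow> 'f"
  assumes "finite P" "t \<in> fspan ((\<lambda>a. outer (u a) (w a)) ` P)"
  shows "\<exists>J \<beta>. J \<subseteq> P \<and> inj_on u J \<and> fs.independent (u ` J) \<and> fspan (u ` J) = fspan (u ` P)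
    \<and> \<beta> ` J \<subseteq> fspan (w ` P) \<and> t = (\<Sum>j\<in>J. outer (u j) (\<beta> j))"
proof -
  obtain c where "t = (\<Sum>a\<in>P. fscale (c a) (outer (u a) (w a)))"
    by (rule fspan_image_sum[OF assms])
  then have t: "t = (\<Sum>a\<in>P. outer (u a) (fscale (c a) (w a)))"
    by (simp add: outer_fscale_right)
  obtain J \<beta> where J: "J \<subseteq> P" "inj_on u J" "fs.independent (u ` J)" "fspan (u ` J) = fspan (u ` P)"
    and sum_eq: "(\<Sum>a\<in>P. outer (u a) (fscale (c a) (w a))) = (\<Sum>j\<in>J. outer (u j) (\<beta> j))"
    and diff: "\<forall>j\<in>J. \<beta> j - fscale (c j) (w j) \<in> fspan ((\<lambda>a. fscale (c a) (w a)) ` (P - J))"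
    by (rule outer_sum_reduce_to_basis[OF assms(1)])
  have "(\<lambda>a. fscale (c a) (w a)) ` (P - J) \<subseteq> fspan (w ` P)"
    by (auto intro!: fs.span_scale fs.span_base[OF imageI])
  then have span_cw: "fspan ((\<lambda>a. fscale (c a) (w a)) ` (P - J)) \<subseteq> fspan (w ` P)"
    by (rule fs.span_minimal[OF _ fs.subspace_span])
  have "\<beta> j \<in> fspan (w ` P)" if "j \<in> J" for j
  proof -
    have "\<beta> j - fscale (c j) (w j) \<in> fspan (w ` P)"
      using diff that span_cw by blast
    moreover have "fscale (c j) (w j) \<in> fspan (w ` P)"
      using that J(1) by (intro fs.span_scale fs.span_base imageI) blast
    ultimately have "(\<beta> j - fscale (c j) (w j)) + fscale (c j) (w j) \<in> fspan (w ` P)"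
      by (rule fs.span_add)
    then show ?thesis
      by simp
  qed
  then show ?thesis
    using J t sum_eq by blast
qed

section \<open>Span-connected families\<close>

text \<open>Connectedness of the linear matroid represented by the family \<open>f\<close> on \<open>E\<close>.\<close>
definition span_connected :: "('e \<Rightarrow> ('a \<Rightarrow> 'f::field)) \<Rightarrow> 'e set \<Rightarrow> bool" where
  "span_connected f E \<longleftrightarrow>
     (\<forall>P. P \<subseteq> E \<longrightarrow> P \<noteq> {} \<longrightarrow> P \<noteq> E \<longrightarrow> fspan (f ` P) \<inter> fspan (f ` (E - P)) \<noteq> {0})"

lemma span_connectedD:
  assumes "span_connected f E" "P \<subseteq> E" "P \<noteq> {}" "P \<noteq> E"
  obtains v where "v \<noteq> 0" "v \<in> fspan (f ` P)" "v \<in> fspan (f ` (E - P))"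
proof -
  have "fspan (f ` P) \<inter> fspan (f ` (E - P)) \<noteq> {0}"
    using assms(1)[unfolded span_connected_def, rule_format, OF assms(2-4)] .
  then show thesis
    using that fs.span_zero by auto
qed

lemma span_connectedI:
  assumes "\<And>P. P \<subseteq> E \<Longrightarrow> P \<noteq> {} \<Longrightarrow> P \<noteq> E \<Longrightarrow>
    \<exists>v. v \<noteq> 0 \<and> v \<in> fspan (f ` P) \<and> v \<in> fspan (f ` (E - P))"
  shows "span_connected f E"
  unfolding span_connected_def
proof (intro allI impI)
  fix P assume "P \<subseteq> E" "P \<noteq> {}" "P \<noteq> E"
  then obtain v where "v \<noteq> 0" "v \<in> fspan (f ` P)" "v \<in> fspan (f ` (E - P))"
    using assms[OF \<open>P \<subseteq> E\<close> \<open>P \<noteq> {}\<close> \<open>P \<noteq> E\<close>] by blast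
  then show "fspan (f ` P) \<inter> fspan (f ` (E - P)) \<noteq> {0}"
    by auto
qed

lemma in_fspan_Diff_if_span_connected:
  assumes "span_connected f E" "e \<in> E" "E \<noteq> {e}"
  shows "f e \<in> fspan (f ` (E - {e}))"
proof -
  have "{e} \<subseteq> E" "{e} \<noteq> {}"
    using assms(2) by auto
  then obtain v where v: "v \<noteq> 0" "v \<in> fspan {f e}" "v \<in> fspan (f ` (E - {e}))"
    using span_connectedD[OF assms(1)] assms(3) by (metis image_empty image_insert)
  then obtain k where k: "v = fscale k (f e)"
    by (auto simp: fs.span_singleton)
  then have "k \<noteq> 0"
    using v(1) by auto
  then show ?thesis
    using fs.span_scale[OF v(3), of "inverse k"] fscale_inverse_cancel unfolding k by metis
qed

lemma span_connected_linear_image: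
  fixes h :: "('a \<Rightarrow> 'f::field) \<Rightarrow> ('b \<Rightarrow> 'f)" and g :: "'e \<Rightarrow> ('a \<Rightarrow> 'f)"
  assumes "Vector_Spaces.linear fscale fscale h" "inj_on h (fspan (g ` E))"
    and "span_connected (\<lambda>a. h (g a)) E"
  shows "span_connected g E"
proof (rule span_connectedI)
  interpret h: Vector_Spaces.linear fscale fscale h
    by (rule assms(1))
  fix P assume P: "P \<subseteq> E" "P \<noteq> {}" "P \<noteq> E"
  obtain v where v: "v \<noteq> 0" "v \<in> fspan (h ` g ` P)" "v \<in> fspan (h ` g ` (E - P))"
    using span_connectedD[OF assms(3) P] by (metis image_image)
  obtain v1 where v1: "v1 \<in> fspan (g ` P)" "v = h v1"
    using v(2) unfolding h.span_image by blast
  obtain v2 where v2: "v2 \<in> fspan (g ` (E - P))" "v = h v2"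
    using v(3) unfolding h.span_image by blast
  have "fspan (g ` P) \<subseteq> fspan (g ` E)" "fspan (g ` (E - P)) \<subseteq> fspan (g ` E)"
    using P(1) by (intro fs.span_mono image_mono; blast)+
  then have "v1 = v2"
    using inj_onD[OF assms(2)] v1 v2 by blast
  moreover have "v1 \<noteq> 0"
    using v(1) v1(2) by auto
  ultimately show "\<exists>v. v \<noteq> 0 \<and> v \<in> fspan (g ` P) \<and> v \<in> fspan (g ` (E - P))"
    using v1(1) v2(1) by blast
qed

lemma span_connected_left_factor:
  fixes u :: "'e \<Rightarrow> 'c \<Rightarrow> 'f::field" and w :: "'e \<Rightarrow> 'd \<Rightarrow> 'f"
  assumes "span_connected (\<lambda>a. outer (u a) (w a)) E"
  shows "span_connected u E"
proof (rule span_connectedI)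
  fix P assume P: "P \<subseteq> E" "P \<noteq> {}" "P \<noteq> E"
  obtain v where v: "v \<noteq> 0" "v \<in> fspan ((\<lambda>a. outer (u a) (w a)) ` P)"
    "v \<in> fspan ((\<lambda>a. outer (u a) (w a)) ` (E - P))"
    by (rule span_connectedD[OF assms P])
  obtain p q where "v (p, q) \<noteq> 0"
    using v(1) by (auto simp: fun_eq_iff)
  then have "column_at q v \<noteq> 0"
    by (auto simp: column_at_def fun_eq_iff)
  then show "\<exists>v. v \<noteq> 0 \<and> v \<in> fspan (u ` P) \<and> v \<in> fspan (u ` (E - P))"
    using column_at_in_fspan[OF v(2)] column_at_in_fspan[OF v(3)] by blast
qed

lemma nonzero_common_vector_if_minimal:
  fixes g :: "'e \<Rightarrow> ('a \<Rightarrow> 'f::field)"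
  assumes "finite S" "e \<notin> S" "g e \<in> fspan (g ` S)" "\<forall>S'\<subset>S. g e \<notin> fspan (g ` S')"
    and Q: "Q \<subseteq> S" "Q \<noteq> {}"
  shows "\<exists>v. v \<noteq> 0 \<and> v \<in> fspan (g ` Q) \<and> v \<in> fspan (g ` (insert e S - Q))"
proof -
  obtain c where c: "g e = (\<Sum>a\<in>S. fscale (c a) (g a))"
    by (rule fspan_image_sum[OF assms(1,3)])
  \<comment> \<open>The part of the minimal representation supported on \<open>Q\<close> is a common non-zero vector.\<close>
  show ?thesis
  proof (intro exI conjI)
    let ?v = "\<Sum>a\<in>Q. fscale (c a) (g a)"
    have split: "g e = ?v + (\<Sum>a\<in>S - Q. fscale (c a) (g a))"
      using c sum.subset_diff[OF Q(1) assms(1)] by (simp add: add.commute)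
    show "?v \<in> fspan (g ` Q)"
      by (rule fspan_image_sum_in)
    have "S - Q \<subset> S"
      using Q by blast
    then have "g e \<notin> fspan (g ` (S - Q))"
      using assms(4) by blast
    then show "?v \<noteq> 0"
      using split fspan_image_sum_in[of c g "S - Q"] by auto
    have "insert e S - Q = insert e (S - Q)"
      using assms(2) Q(1) by blast
    moreover have "g e - (\<Sum>a\<in>S - Q. fscale (c a) (g a)) \<in> fspan (g ` insert e (S - Q))"
    proof (rule fs.span_diff)
      show "g e \<in> fspan (g ` insert e (S - Q))"
        by (intro fs.span_base) simp
      have "fspan (g ` (S - Q)) \<subseteq> fspan (g ` insert e (S - Q))"
        by (intro fs.span_mono image_mono) blast
      then show "(\<Sum>a\<in>S - Q. fscale (c a) (g a)) \<in> fspan (g ` insert e (S - Q))"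
        using fspan_image_sum_in[of c g "S - Q"] by blast
    qed
    ultimately show "?v \<in> fspan (g ` (insert e S - Q))"
      using split by simp
  qed
qed

lemma span_connected_insert_minimal:
  fixes g :: "'e \<Rightarrow> ('a \<Rightarrow> 'f::field)"
  assumes "finite S" "e \<notin> S" "g e \<in> fspan (g ` S)" "\<forall>S'\<subset>S. g e \<notin> fspan (g ` S')"
  shows "span_connected g (insert e S)"
proof (rule span_connectedI)
  note common = nonzero_common_vector_if_minimal[OF assms]
  fix P assume P: "P \<subseteq> insert e S" "P \<noteq> {}" "P \<noteq> insert e S"
  show "\<exists>v. v \<noteq> 0 \<and> v \<in> fspan (g ` P) \<and> v \<in> fspan (g ` (insert e S - P))"
  proof (cases "e \<in> P")
    case True
    have "insert e S - P \<subseteq> S" "insert e S - P \<noteq> {}" "insert e S - (insert e S - P) = P"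
      using P True by auto
    then show ?thesis
      using common[of "insert e S - P"] by auto
  next
    case False
    then have "P \<subseteq> S"
      using P(1) by blast
    then show ?thesis
      by (rule common[OF _ P(2)])
  qed
qed

lemma fspan_Int_zero_trans:
  fixes f :: "'e \<Rightarrow> ('a \<Rightarrow> 'f::field)"
  assumes "Q \<subseteq> P" "P \<subseteq> E"
    and "fspan (f ` Q) \<inter> fspan (f ` (P - Q)) = {0}"
    and "fspan (f ` P) \<inter> fspan (f ` (E - P)) = {0}"
  shows "fspan (f ` Q) \<inter> fspan (f ` (E - Q)) = {0}"
proof -
  have "v = 0" if v: "v \<in> fspan (f ` Q)" "v \<in> fspan (f ` (E - Q))" for v
  proof -
    have "f ` (E - Q) = f ` (P - Q) \<union> f ` (E - P)"
      using assms(1,2) by blast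
    then obtain x y where xy: "v = x + y" "x \<in> fspan (f ` (P - Q))" "y \<in> fspan (f ` (E - P))"
      using v(2) by (auto simp: fs.span_Un)
    have "fspan (f ` Q) \<subseteq> fspan (f ` P)" "fspan (f ` (P - Q)) \<subseteq> fspan (f ` P)"
      using assms(1) by (intro fs.span_mono image_mono; blast)+
    then have "v - x \<in> fspan (f ` P)"
      using v(1) xy(2) fs.span_diff by blast
    then have "y \<in> fspan (f ` P) \<inter> fspan (f ` (E - P))"
      using xy(1,3) by simp
    then have "y = 0"
      unfolding assms(4) by simp
    then have "v \<in> fspan (f ` Q) \<inter> fspan (f ` (P - Q))"
      using v(1) xy(1,2) by simp
    then show "v = 0"
      unfolding assms(3) by simp
  qed
  then show ?thesis
    using fs.span_zero by blast
qed

lemma fspan_Int_zero_refine: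
  fixes f :: "'e \<Rightarrow> ('a \<Rightarrow> 'f::field)"
  assumes "P \<subseteq> E" "fspan (f ` P) \<inter> fspan (f ` (E - P)) = {0}"
    and "partition_on P \<Q>" "\<forall>Q\<in>\<Q>. fspan (f ` Q) \<inter> fspan (f ` (P - Q)) = {0}"
  shows "\<forall>Q\<in>\<Q>. fspan (f ` Q) \<inter> fspan (f ` (E - Q)) = {0}"
proof
  fix Q assume Q: "Q \<in> \<Q>"
  then have "Q \<subseteq> P"
    using assms(3) by (auto simp: partition_on_def)
  then show "fspan (f ` Q) \<inter> fspan (f ` (E - Q)) = {0}"
    using fspan_Int_zero_trans[OF _ assms(1) _ assms(2)] assms(4) Q by blast
qed

lemma partition_on_Un:
  assumes "partition_on A \<P>" "partition_on B \<Q>" "A \<inter> B = {}"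
  shows "partition_on (A \<union> B) (\<P> \<union> \<Q>)"
  using assms unfolding partition_on_def by (auto intro: disjoint_union)

lemma finite_part_of_partition_on:
  assumes "finite E" "partition_on E \<P>" "P \<in> \<P>"
  shows "finite P"
proof -
  have "P \<subseteq> E"
    using partition_onD1[OF assms(2)] assms(3) by blast
  then show ?thesis
    using assms(1) by (rule finite_subset)
qed

lemma span_connected_components:
  fixes f :: "'e \<Rightarrow> ('a \<Rightarrow> 'f::field)"
  assumes "finite E"
  obtains \<P> where "partition_on E \<P>" "\<forall>P\<in>\<P>. span_connected f P"
    "\<forall>P\<in>\<P>. fspan (f ` P) \<inter> fspan (f ` (E - P)) = {0}"
  using assms
proof (induction "card E" arbitrary: E thesis rule: less_induct)
  case less
  consider "E = {}" | "E \<noteq> {}" "span_connected f E" | "\<not> span_connected f E"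
    by blast
  then show ?case
  proof cases
    case 1
    then show ?thesis
      using less.prems(1)[of "{}"] partition_on_empty by blast
  next
    case 2
    then show ?thesis
      using less.prems(1)[of "{E}"] partition_on_space[OF 2(1)] fs.span_zero by auto
  next
    case 3
    then obtain P where P: "P \<subseteq> E" "P \<noteq> {}" "P \<noteq> E"
      and direct: "fspan (f ` P) \<inter> fspan (f ` (E - P)) = {0}"
      unfolding span_connected_def by auto
    have direct': "fspan (f ` (E - P)) \<inter> fspan (f ` (E - (E - P))) = {0}"
      using direct P(1) by (simp add: Int_commute double_diff)
    have "finite P"
      using P(1) less.prems(2) by (rule finite_subset)
    moreover have "card P < card E"
      using P(1,3) less.prems(2) by (simp add: psubsetI psubset_card_mono)
    ultimately obtain \<P>1 where \<P>1: "partition_on P \<P>1" "\<forall>Q\<in>\<P>1. span_connected f Q"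
      "\<forall>Q\<in>\<P>1. fspan (f ` Q) \<inter> fspan (f ` (P - Q)) = {0}"
      using less.hyps by blast
    have "E - P \<subset> E"
      using P(1,2) by blast
    then have "card (E - P) < card E"
      using less.prems(2) by (rule psubset_card_mono[rotated])
    then obtain \<P>2 where \<P>2: "partition_on (E - P) \<P>2" "\<forall>Q\<in>\<P>2. span_connected f Q"
      "\<forall>Q\<in>\<P>2. fspan (f ` Q) \<inter> fspan (f ` (E - P - Q)) = {0}"
      using less.hyps less.prems(2) by blast
    show ?thesis
    proof (rule less.prems(1))
      show "partition_on E (\<P>1 \<union> \<P>2)"
        using partition_on_Un[OF \<P>1(1) \<P>2(1)] P(1) by (simp add: Un_absorb1)
      show "\<forall>Q\<in>\<P>1 \<union> \<P>2. span_connected f Q"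
        using \<P>1(2) \<P>2(2) by blast
      show "\<forall>Q\<in>\<P>1 \<union> \<P>2. fspan (f ` Q) \<inter> fspan (f ` (E - Q)) = {0}"
        using fspan_Int_zero_refine[OF P(1) direct \<P>1(1,3)]
          fspan_Int_zero_refine[OF Diff_subset direct' \<P>2(1,3)] by blast
    qed
  qed
qed

lemma fdim_Union_if_fspan_Int_zero:
  fixes f :: "'e \<Rightarrow> ('a \<Rightarrow> 'f::field)"
  assumes "finite \<P>" "\<forall>P\<in>\<P>. finite P" "disjoint \<P>"
    and "\<forall>P\<in>\<P>. fspan (f ` P) \<inter> fspan (f ` (\<Union>\<P> - P)) = {0}"
  shows "fdim (f ` \<Union>\<P>) = (\<Sum>P\<in>\<P>. fdim (f ` P))"
  using assms
proof (induction \<P> rule: finite_induct)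
  case empty
  then show ?case
    by simp
next
  case (insert Q \<P>)
  have disj: "Q \<inter> \<Union>\<P> = {}"
    using insert.prems(2) insert.hyps(2) by (auto simp: disjoint_def)
  then have "\<Union>(insert Q \<P>) - Q = \<Union>\<P>"
    by blast
  then have "fspan (f ` Q) \<inter> fspan (f ` \<Union>\<P>) = {0}"
    using insert.prems(3) by (metis insertI1)
  then have dim_insert: "fdim (f ` \<Union>(insert Q \<P>)) = fdim (f ` Q) + fdim (f ` \<Union>\<P>)"
    using fdim_Un_if_fspan_Int_zero[of "f ` Q" "f ` \<Union>\<P>"] insert.prems(1) insert.hyps(1)
    by (simp add: image_Un)
  have "fspan (f ` P) \<inter> fspan (f ` (\<Union>\<P> - P)) = {0}" if "P \<in> \<P>" for P
  proof -
    have "fspan (f ` (\<Union>\<P> - P)) \<subseteq> fspan (f ` (\<Union>(insert Q \<P>) - P))"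
      by (intro fs.span_mono image_mono) blast
    moreover have "fspan (f ` P) \<inter> fspan (f ` (\<Union>(insert Q \<P>) - P)) = {0}"
      using insert.prems(3) that by blast
    ultimately show ?thesis
      using fs.span_zero by auto
  qed
  moreover have "\<forall>P\<in>\<P>. finite P" "disjoint \<P>"
    using insert.prems(1,2) by (simp_all add: pairwise_insert)
  ultimately have "fdim (f ` \<Union>\<P>) = (\<Sum>P\<in>\<P>. fdim (f ` P))"
    using insert.IH by blast
  then show ?case
    using dim_insert insert.hyps by simp
qed

lemma fspan_partition_sum:
  fixes f :: "'e \<Rightarrow> ('a \<Rightarrow> 'f::field)"
  assumes "finite E" "partition_on E \<P>" "t \<in> fspan (f ` E)"
  obtains y where "\<forall>P\<in>\<P>. y P \<in> fspan (f ` P)" "t = (\<Sum>P\<in>\<P>. y P)"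
proof -
  obtain c where "t = (\<Sum>a\<in>E. fscale (c a) (f a))"
    by (rule fspan_image_sum[OF assms(1,3)])
  also have "\<dots> = (\<Sum>P\<in>\<P>. \<Sum>a\<in>P. fscale (c a) (f a))"
  proof -
    have "\<forall>P\<in>\<P>. \<forall>Q\<in>\<P>. P \<noteq> Q \<longrightarrow> P \<inter> Q = {}"
      using disjointD[OF partition_onD2[OF assms(2)]] by blast
    moreover have "\<forall>P\<in>\<P>. finite P"
      using finite_part_of_partition_on[OF assms(1,2)] by blast
    ultimately show ?thesis
      using sum.Union_disjoint[of \<P>] partition_onD1[OF assms(2)] by simp
  qed
  finally show thesis
    using that[of "\<lambda>P. \<Sum>a\<in>P. fscale (c a) (f a)"] fspan_image_sum_in by blast
qed

lemma not_in_fspan_Diff_component: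
  fixes f :: "'e \<Rightarrow> ('a \<Rightarrow> 'f::field)"
  assumes "span_connected f (insert e E)" "e \<notin> E" "Q \<subseteq> E" "Q \<noteq> {}"
    and "fspan (f ` Q) \<inter> fspan (f ` (E - Q)) = {0}"
  shows "f e \<notin> fspan (f ` (E - Q))"
proof
  assume fe: "f e \<in> fspan (f ` (E - Q))"
  have "insert e E - Q = insert e (E - Q)"
    using assms(2,3) by blast
  then have same_span: "fspan (f ` (insert e E - Q)) = fspan (f ` (E - Q))"
    using fs.span_redundant[OF fe] by simp
  have "Q \<subseteq> insert e E" "Q \<noteq> insert e E"
    using assms(2,3) by auto
  then obtain v where "v \<noteq> 0" "v \<in> fspan (f ` Q)" "v \<in> fspan (f ` (insert e E - Q))"
    by (rule span_connectedD[OF assms(1) _ assms(4)])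
  then have "v \<in> fspan (f ` Q) \<inter> fspan (f ` (E - Q))" "v \<noteq> 0"
    unfolding same_span by simp_all
  then show False
    unfolding assms(5) by simp
qed

lemma component_summands_nonzero:
  fixes f :: "'e \<Rightarrow> ('a \<Rightarrow> 'f::field)"
  assumes "span_connected f (insert e E)" "e \<notin> E" "partition_on E \<P>" "finite \<P>"
    and "\<forall>P\<in>\<P>. fspan (f ` P) \<inter> fspan (f ` (E - P)) = {0}"
    and "\<forall>P\<in>\<P>. y P \<in> fspan (f ` P)" "f e = (\<Sum>P\<in>\<P>. y P)"
  shows "\<forall>P\<in>\<P>. y P \<noteq> 0"
proof (intro ballI notI)
  fix Q assume Q: "Q \<in> \<P>" and "y Q = 0"
  have Q_part: "Q \<subseteq> E" "Q \<noteq> {}"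
    using Q assms(3) by (auto simp: partition_on_def)
  have "f e = (\<Sum>P\<in>\<P> - {Q}. y P)"
    using assms(7) sum.remove[OF assms(4) Q, of y] \<open>y Q = 0\<close> by simp
  also have "\<dots> \<in> fspan (f ` (E - Q))"
  proof (rule fs.span_sum)
    fix P assume P: "P \<in> \<P> - {Q}"
    have "P \<inter> Q = {}"
      using disjointD[OF partition_onD2[OF assms(3)]] P Q by blast
    moreover have "P \<subseteq> E"
      using partition_onD1[OF assms(3)] P by blast
    ultimately have "f ` P \<subseteq> f ` (E - Q)"
      by blast
    then show "y P \<in> fspan (f ` (E - Q))"
      using assms(6) P fs.span_mono by blast
  qed
  finally show False
    using not_in_fspan_Diff_component[OF assms(1,2) Q_part] assms(5) Q by blast
qed

section \<open>Connected families of rank-one tensors\<close>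

lemma outer_span_rep_basis_family:
  fixes u :: "'e \<Rightarrow> 'c \<Rightarrow> 'f::field" and w :: "'e \<Rightarrow> 'd \<Rightarrow> 'f"
  assumes "\<forall>P\<in>\<P>. finite P" "\<forall>P\<in>\<P>. y P \<in> fspan ((\<lambda>a. outer (u a) (w a)) ` P)"
  obtains J \<beta> where "\<forall>P\<in>\<P>. J P \<subseteq> P" "\<forall>P\<in>\<P>. inj_on u (J P)"
    "\<forall>P\<in>\<P>. fs.independent (u ` J P)" "\<forall>P\<in>\<P>. fspan (u ` J P) = fspan (u ` P)"
    "\<forall>P\<in>\<P>. \<beta> P ` J P \<subseteq> fspan (w ` P)" "\<forall>P\<in>\<P>. y P = (\<Sum>j\<in>J P. outer (u j) (\<beta> P j))"
proof -
  have "\<forall>P\<in>\<P>. \<exists>J \<beta>. J \<subseteq> P \<and> inj_on u J \<and> fs.independent (u ` J) \<and> fspan (u ` J) = fspan (u ` P)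
      \<and> \<beta> ` J \<subseteq> fspan (w ` P) \<and> y P = (\<Sum>j\<in>J. outer (u j) (\<beta> j))"
    using assms by (intro ballI outer_span_rep_basis) auto
  from bchoice[OF this] obtain J where "\<forall>P\<in>\<P>. \<exists>\<beta>. J P \<subseteq> P \<and> inj_on u (J P)
      \<and> fs.independent (u ` J P) \<and> fspan (u ` J P) = fspan (u ` P)
      \<and> \<beta> ` J P \<subseteq> fspan (w ` P) \<and> y P = (\<Sum>j\<in>J P. outer (u j) (\<beta> j))"
    by blast
  from bchoice[OF this] obtain \<beta> where "\<forall>P\<in>\<P>. J P \<subseteq> P \<and> inj_on u (J P)
      \<and> fs.independent (u ` J P) \<and> fspan (u ` J P) = fspan (u ` P)
      \<and> \<beta> P ` J P \<subseteq> fspan (w ` P) \<and> y P = (\<Sum>j\<in>J P. outer (u j) (\<beta> P j))"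
    by blast
  then show thesis
    by (intro that[of J \<beta>]) blast+
qed

lemma fdim_outer_parts_bound:
  fixes u :: "'e \<Rightarrow> 'c \<Rightarrow> 'f::field" and w :: "'e \<Rightarrow> 'd \<Rightarrow> 'f"
    and \<beta> :: "'e set \<Rightarrow> 'e \<Rightarrow> 'd \<Rightarrow> 'f"
  assumes "finite \<P>" "\<forall>P\<in>\<P>. finite P" "\<forall>P\<in>\<P>. J P \<subseteq> P"
    and "\<forall>P\<in>\<P>. inj_on u (J P)" "\<forall>P\<in>\<P>. fs.independent (u ` J P)"
    and "\<forall>P\<in>\<P>. fspan (u ` J P) = fspan (u ` P)" "\<forall>P\<in>\<P>. \<beta> P ` J P \<subseteq> fspan (w ` P)"
    and "(\<Sum>P\<in>\<P>. \<Sum>j\<in>J P. outer (u j) (\<beta> P j)) = outer a b"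
  shows "fdim (u ` \<Union>\<P>) + fdim (w ` \<Union>\<P>) + (\<Sum>P\<in>\<P>. fdim (\<beta> P ` J P))
    \<le> (\<Sum>P\<in>\<P>. fdim (u ` P) + fdim (w ` P)) + 1"
proof -
  have fin_J: "\<forall>P\<in>\<P>. finite (J P)"
    using assms(2,3) finite_subset by blast
  \<comment> \<open>A single sum over all parts, so that the rank-one bound counts \<open>\<Sum>P\<in>\<P>. fdim (u ` P)\<close> terms.\<close>
  define K where "K = (SIGMA P:\<P>. J P)"
  have fin_K: "finite K"
    unfolding K_def using assms(1) fin_J by (intro finite_SigmaI) auto
  have "(\<Sum>k\<in>K. outer (u (snd k)) (\<beta> (fst k) (snd k))) = outer a b"
    unfolding K_def using sum.Sigma[OF assms(1) fin_J, of "\<lambda>P j. outer (u j) (\<beta> P j)"] assms(8)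
    by (simp add: split_def)
  then have "fdim ((\<lambda>k. u (snd k)) ` K) + fdim ((\<lambda>k. \<beta> (fst k) (snd k)) ` K) \<le> card K + 1"
    by (rule fdim_le_if_outer_sum_eq_outer[OF fin_K])
  moreover have "card K = (\<Sum>P\<in>\<P>. fdim (u ` P))"
  proof -
    have "card (J P) = fdim (u ` P)" if "P \<in> \<P>" for P
      using card_image[of u "J P"] fs.dim_eq_card_independent[of "u ` J P"]
        fs.span_eq_dim[of "u ` J P" "u ` P"] assms(4-6) that by simp
    then show ?thesis
      unfolding K_def using card_SigmaI[OF assms(1) fin_J] by simp
  qed
  moreover have "fdim ((\<lambda>k. u (snd k)) ` K) = fdim (u ` \<Union>\<P>)"
  proof (rule fs.span_eq_dim)
    have "(\<lambda>k. u (snd k)) ` K = u ` (\<Union>P\<in>\<P>. J P)"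
      unfolding K_def by (auto simp: image_iff; blast)
    then show "fspan ((\<lambda>k. u (snd k)) ` K) = fspan (u ` \<Union>\<P>)"
      using fspan_image_UN_eq[OF assms(6)] by simp
  qed
  moreover have "fdim (w ` \<Union>\<P>) + (\<Sum>P\<in>\<P>. fdim (\<beta> P ` J P))
      \<le> fdim ((\<lambda>k. \<beta> (fst k) (snd k)) ` K) + (\<Sum>P\<in>\<P>. fdim (w ` P))"
  proof -
    have "(\<lambda>k. \<beta> (fst k) (snd k)) ` K = (\<Union>P\<in>\<P>. \<beta> P ` J P)"
      unfolding K_def by (auto simp: image_iff; blast)
    moreover have "w ` \<Union>\<P> = (\<Union>P\<in>\<P>. w ` P)"
      by blast
    moreover have "\<forall>P\<in>\<P>. finite (w ` P) \<and> finite (\<beta> P ` J P) \<and> \<beta> P ` J P \<subseteq> fspan (w ` P)"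
      using assms(2,7) fin_J by blast
    ultimately show ?thesis
      using fdim_UN_replace_le[OF assms(1), of "\<lambda>P. w ` P" "\<lambda>P. \<beta> P ` J P" "{}"] by simp
  qed
  ultimately show ?thesis
    unfolding sum.distrib by linarith
qed

lemma fdim_outer_parts_le:
  fixes u :: "'e \<Rightarrow> 'c \<Rightarrow> 'f::field" and w :: "'e \<Rightarrow> 'd \<Rightarrow> 'f"
  assumes "finite \<P>" "\<forall>P\<in>\<P>. finite P"
    and "\<forall>P\<in>\<P>. y P \<in> fspan ((\<lambda>a. outer (u a) (w a)) ` P)" "\<forall>P\<in>\<P>. y P \<noteq> 0"
    and "(\<Sum>P\<in>\<P>. y P) = outer a b"
  shows "fdim (u ` \<Union>\<P>) + fdim (w ` \<Union>\<P>) + card \<P>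
    \<le> (\<Sum>P\<in>\<P>. fdim (u ` P) + fdim (w ` P)) + 1"
proof -
  obtain J \<beta> where J_sub: "\<forall>P\<in>\<P>. J P \<subseteq> P" and inj: "\<forall>P\<in>\<P>. inj_on u (J P)"
    and indep: "\<forall>P\<in>\<P>. fs.independent (u ` J P)" and span: "\<forall>P\<in>\<P>. fspan (u ` J P) = fspan (u ` P)"
    and \<beta>_span: "\<forall>P\<in>\<P>. \<beta> P ` J P \<subseteq> fspan (w ` P)"
    and y_eq: "\<forall>P\<in>\<P>. y P = (\<Sum>j\<in>J P. outer (u j) (\<beta> P j))"
    by (rule outer_span_rep_basis_family[OF assms(2,3)])
  have "(\<Sum>P\<in>\<P>. \<Sum>j\<in>J P. outer (u j) (\<beta> P j)) = outer a b"
    using assms(5) y_eq by (metis (no_types, lifting) sum.cong)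
  note bound = fdim_outer_parts_bound[OF assms(1,2) J_sub inj indep span \<beta>_span this]
  have "1 \<le> fdim (\<beta> P ` J P)" if P: "P \<in> \<P>" for P
  proof -
    obtain j where j: "j \<in> J P" "\<beta> P j \<noteq> 0"
    proof (rule ccontr)
      assume "\<not> thesis"
      then have "\<forall>j\<in>J P. \<beta> P j = 0"
        using that by blast
      then have "y P = 0"
        using y_eq P by simp
      then show False
        using assms(4) P by blast
    qed
    have "finite (J P)"
      using J_sub assms(2) P finite_subset by blast
    then have "finite (\<beta> P ` J P)"
      by (rule finite_imageI)
    then show ?thesis
      using fdim_ge_1 imageI[OF j(1), of "\<beta> P"] j(2) by blast
  qed
  then have "(\<Sum>P\<in>\<P>. 1) \<le> (\<Sum>P\<in>\<P>. fdim (\<beta> P ` J P))"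
    by (rule sum_mono)
  then show ?thesis
    using bound by simp
qed

lemma fdim_outer_le_if_components_le:
  fixes u :: "'e \<Rightarrow> 'c \<Rightarrow> 'f::field" and w :: "'e \<Rightarrow> 'd \<Rightarrow> 'f"
  assumes "finite E" "partition_on E \<P>"
    and "\<forall>P\<in>\<P>. fspan ((\<lambda>a. outer (u a) (w a)) ` P) \<inter> fspan ((\<lambda>a. outer (u a) (w a)) ` (E - P)) = {0}"
    and "\<forall>P\<in>\<P>. y P \<in> fspan ((\<lambda>a. outer (u a) (w a)) ` P)" "\<forall>P\<in>\<P>. y P \<noteq> 0"
    and "(\<Sum>P\<in>\<P>. y P) = outer a b"
    and "\<forall>P\<in>\<P>. fdim (u ` P) + fdim (w ` P) \<le> fdim ((\<lambda>a. outer (u a) (w a)) ` P) + 1"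
  shows "fdim (u ` E) + fdim (w ` E) \<le> fdim ((\<lambda>a. outer (u a) (w a)) ` E) + 1"
proof -
  let ?f = "\<lambda>a. outer (u a) (w a)"
  have fin_\<P>: "finite \<P>"
    using finite_elements[OF assms(1,2)] .
  have Union_\<P>: "\<Union>\<P> = E" and disj_\<P>: "disjoint \<P>"
    using assms(2) by (auto simp: partition_on_def)
  have fin_parts: "\<forall>P\<in>\<P>. finite P"
    using finite_part_of_partition_on[OF assms(1,2)] by blast
  have "fdim (u ` E) + fdim (w ` E) + card \<P> \<le> (\<Sum>P\<in>\<P>. fdim (u ` P) + fdim (w ` P)) + 1"
    using fdim_outer_parts_le[OF fin_\<P> fin_parts assms(4-6)] unfolding Union_\<P> .
  also have "\<dots> \<le> (\<Sum>P\<in>\<P>. fdim (?f ` P) + 1) + 1"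
    using assms(7) by (simp add: sum_mono)
  also have "\<dots> = fdim (?f ` E) + card \<P> + 1"
  proof -
    have "fdim (?f ` E) = (\<Sum>P\<in>\<P>. fdim (?f ` P))"
      using fdim_Union_if_fspan_Int_zero[OF fin_\<P> fin_parts disj_\<P>, of ?f] assms(3)
      unfolding Union_\<P> by blast
    then show ?thesis
      by (simp add: sum.distrib sum_Suc)
  qed
  finally show ?thesis
    by simp
qed

lemma fdim_outer_insert_in_span:
  fixes u :: "'e \<Rightarrow> 'c \<Rightarrow> 'f::field" and w :: "'e \<Rightarrow> 'd \<Rightarrow> 'f"
  assumes "outer (u e) (w e) \<in> fspan ((\<lambda>a. outer (u a) (w a)) ` E)" "u e \<noteq> 0" "w e \<noteq> 0"
  shows "fdim (u ` insert e E) = fdim (u ` E)" "fdim (w ` insert e E) = fdim (w ` E)"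
    and "fdim ((\<lambda>a. outer (u a) (w a)) ` insert e E) = fdim ((\<lambda>a. outer (u a) (w a)) ` E)"
  using fdim_insert_in_span[OF left_in_fspan_if_outer_in_fspan[OF assms(1,3)]]
    fdim_insert_in_span[OF right_in_fspan_if_outer_in_fspan[OF assms(1,2)]]
    fdim_insert_in_span[OF assms(1)] by simp_all

lemma fdim_outer_span_connected:
  fixes u :: "'e \<Rightarrow> 'c \<Rightarrow> 'f::field" and w :: "'e \<Rightarrow> 'd \<Rightarrow> 'f"
  assumes "finite E" "E \<noteq> {}" "\<forall>a\<in>E. u a \<noteq> 0 \<and> w a \<noteq> 0"
    and "span_connected (\<lambda>a. outer (u a) (w a)) E"
  shows "fdim (u ` E) + fdim (w ` E) \<le> fdim ((\<lambda>a. outer (u a) (w a)) ` E) + 1"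
  using assms
proof (induction "card E" arbitrary: E rule: less_induct)
  case less
  let ?f = "\<lambda>a. outer (u a) (w a)"
  obtain e where e: "e \<in> E"
    using less.prems(2) by blast
  have ue: "u e \<noteq> 0" and we: "w e \<noteq> 0"
    using less.prems(3) e by auto
  show ?case
  proof (cases "E = {e}")
    case True
    have "?f e \<noteq> 0"
      using ue we by (simp add: outer_eq_0_iff)
    then show ?thesis
      using True ue we by (simp add: fdim_singleton)
  next
    case False
    define E' where "E' = E - {e}"
    have E: "E = insert e E'" "e \<notin> E'" "finite E'"
      using e less.prems(1) by (auto simp: E'_def)
    have fe: "?f e \<in> fspan (?f ` E')"
      using in_fspan_Diff_if_span_connected[OF less.prems(4) e False] unfolding E'_def .
    obtain \<P> where \<P>: "partition_on E' \<P>" "\<forall>P\<in>\<P>. span_connected ?f P"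
      and direct: "\<forall>P\<in>\<P>. fspan (?f ` P) \<inter> fspan (?f ` (E' - P)) = {0}"
      by (rule span_connected_components[OF E(3)])
    obtain y where y: "\<forall>P\<in>\<P>. y P \<in> fspan (?f ` P)" "?f e = (\<Sum>P\<in>\<P>. y P)"
      using fspan_partition_sum[OF E(3) \<P>(1) fe] by blast
    have nonzero: "\<forall>P\<in>\<P>. y P \<noteq> 0"
      using component_summands_nonzero[OF _ E(2) \<P>(1) finite_elements[OF E(3) \<P>(1)] direct y]
        less.prems(4) E(1) by simp
    have IH: "\<forall>P\<in>\<P>. fdim (u ` P) + fdim (w ` P) \<le> fdim (?f ` P) + 1"
    proof
      fix P assume P: "P \<in> \<P>"
      then have sub: "P \<subseteq> E'" "P \<noteq> {}"
        using \<P>(1) by (auto simp: partition_on_def)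
      show "fdim (u ` P) + fdim (w ` P) \<le> fdim (?f ` P) + 1"
      proof (rule less.hyps)
        show "card P < card E"
          using sub E less.prems(1) by (intro psubset_card_mono) auto
        show "finite P"
          using sub(1) E(3) by (rule finite_subset)
        show "\<forall>a\<in>P. u a \<noteq> 0 \<and> w a \<noteq> 0"
          using less.prems(3) sub(1) E(1) by blast
      qed (use sub(2) \<P>(2) P in auto)
    qed
    have "fdim (u ` E') + fdim (w ` E') \<le> fdim (?f ` E') + 1"
      by (rule fdim_outer_le_if_components_le[OF E(3) \<P>(1) direct y(1) nonzero y(2)[symmetric] IH])
    then show ?thesis
      unfolding E(1) fdim_outer_insert_in_span[OF fe ue we] .
  qed
qed

section \<open>Connected families of product tensors\<close>

text \<open>The tensor \<open>ptensor (Suc m) z\<close> is \<open>outer (ptensor m z) (z (Suc m))\<close> read on the diagonal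
  \<open>q = \<iota> (Suc m)\<close>; this identification is injective on functions that ignore the
  coordinate \<open>Suc m\<close> of their first argument.\<close>
definition join_last :: "nat \<Rightarrow> ((nat \<Rightarrow> 'i) \<times> 'i \<Rightarrow> 'f) \<Rightarrow> ((nat \<Rightarrow> 'i) \<Rightarrow> 'f)" where
  "join_last m F = (\<lambda>\<iota>. F (\<iota>, \<iota> (Suc m)))"

definition ignores_last :: "nat \<Rightarrow> ((nat \<Rightarrow> 'i) \<times> 'i \<Rightarrow> 'f) set" where
  "ignores_last m = {F. \<forall>p q. F (p, q) = F (p(Suc m := q), q)}"

lemma linear_join_last:
  "Vector_Spaces.linear fscale fscale (join_last m :: ((nat \<Rightarrow> 'i) \<times> 'i \<Rightarrow> 'f::field) \<Rightarrow> _)"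
  unfolding Vector_Spaces.linear_iff by (auto simp: vector_space_fscale join_last_def fscale_def)

lemma subspace_ignores_last: "fs.subspace (ignores_last m :: ((nat \<Rightarrow> 'i) \<times> 'i \<Rightarrow> 'f::field) set)"
  unfolding fs.subspace_def ignores_last_def by (auto simp: fscale_def)

lemma inj_on_join_last: "inj_on (join_last m) (ignores_last m)"
proof (rule inj_onI)
  fix F G assume F: "F \<in> ignores_last m" and G: "G \<in> ignores_last m"
    and eq: "join_last m F = join_last m G"
  have "F (p, q) = G (p, q)" for p q
  proof -
    have "F (p, q) = F (p(Suc m := q), q)" "G (p, q) = G (p(Suc m := q), q)"
      using F G unfolding ignores_last_def by blast+
    moreover have "join_last m F (p(Suc m := q)) = join_last m G (p(Suc m := q))"
      by (simp add: eq)
    ultimately show ?thesis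
      by (simp add: join_last_def)
  qed
  then show "F = G"
    by (auto simp: fun_eq_iff)
qed

lemma ptensor_Suc: "ptensor (Suc m) z = join_last m (outer (ptensor m z) (z (Suc m)))"
  by (simp add: ptensor_def join_last_def fun_eq_iff)

lemma outer_ptensor_ignores_last: "outer (ptensor m z) w \<in> ignores_last m"
proof -
  have "ptensor m z (p(Suc m := q)) = ptensor m z p" for p q
    unfolding ptensor_def by (intro prod.cong) auto
  then show ?thesis
    by (simp add: ignores_last_def)
qed

lemma fdim_ptensor_span_connected:
  fixes z :: "'e \<Rightarrow> nat \<Rightarrow> 'i \<Rightarrow> 'f::field"
  assumes "finite E" "E \<noteq> {}" "\<forall>a\<in>E. ptensor m (z a) \<noteq> 0"
    and "span_connected (\<lambda>a. ptensor m (z a)) E"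
  shows "1 + (\<Sum>j\<in>{1..m}. fdim ((\<lambda>a. z a j) ` E)) \<le> fdim ((\<lambda>a. ptensor m (z a)) ` E) + m"
  using assms(3,4)
proof (induction m)
  case 0
  have "(\<lambda>a. ptensor 0 (z a)) ` E = {\<lambda>_. 1}"
    using assms(2) by (auto simp: ptensor_def)
  moreover have "(\<lambda>_. 1) \<noteq> (0 :: (nat \<Rightarrow> 'i) \<Rightarrow> 'f)"
    by (simp add: fun_eq_iff)
  ultimately show ?case
    by (simp add: fdim_singleton)
next
  case (Suc m)
  let ?u = "\<lambda>a. ptensor m (z a)" and ?w = "\<lambda>a. z a (Suc m)"
  let ?f = "\<lambda>a. outer (ptensor m (z a)) (z a (Suc m))"
  have "fspan (?f ` E) \<subseteq> ignores_last m"
    using outer_ptensor_ignores_last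
    by (intro fs.span_minimal[OF _ subspace_ignores_last]) blast
  then have inj: "inj_on (join_last m) (fspan (?f ` E))"
    using inj_on_join_last inj_on_subset by blast
  have nonzero: "\<forall>a\<in>E. ?u a \<noteq> 0 \<and> ?w a \<noteq> 0"
  proof
    fix a assume "a \<in> E"
    then have "join_last m (?f a) \<noteq> 0"
      using Suc.prems(1) by (metis ptensor_Suc)
    then show "?u a \<noteq> 0 \<and> ?w a \<noteq> 0"
      by (auto simp: join_last_def outer_eq_0_iff fun_eq_iff)
  qed
  have conn: "span_connected ?f E"
    using span_connected_linear_image[OF linear_join_last inj] Suc.prems(2)
    by (simp add: ptensor_Suc)
  have "fdim (?u ` E) + fdim (?w ` E) \<le> fdim (?f ` E) + 1"
    by (rule fdim_outer_span_connected[OF assms(1,2) nonzero conn])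
  moreover have "1 + (\<Sum>j\<in>{1..m}. fdim ((\<lambda>a. z a j) ` E)) \<le> fdim (?u ` E) + m"
    using Suc.IH nonzero span_connected_left_factor[OF conn] by blast
  moreover have "fdim ((\<lambda>a. ptensor (Suc m) (z a)) ` E) = fdim (?f ` E)"
  proof -
    have "(\<lambda>a. ptensor (Suc m) (z a)) ` E = join_last m ` ?f ` E"
      by (auto simp: ptensor_Suc)
    then show ?thesis
      using fdim_image_linear_inj[OF linear_join_last inj] assms(1) by simp
  qed
  ultimately show ?case
    by simp
qed

lemma card_lt_fdim_ptensor_if_span_connected:
  fixes y :: "'e \<Rightarrow> nat \<Rightarrow> 'i \<Rightarrow> 'f::field"
  assumes "finite C" "C \<noteq> {}" "\<forall>a\<in>C. ptensor m (y a) \<noteq> 0"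
    and "span_connected (\<lambda>a. ptensor m (y a)) C"
    and "S \<subseteq> C" "int (card S) \<le> (\<Sum>j\<in>{1..m}. int (fdim ((\<lambda>a. y a j) ` S)) - 1)"
  shows "card S < fdim ((\<lambda>a. ptensor m (y a)) ` C)"
proof -
  have "(\<Sum>j\<in>{1..m}. int (fdim ((\<lambda>a. y a j) ` S)) - 1)
      \<le> (\<Sum>j\<in>{1..m}. int (fdim ((\<lambda>a. y a j) ` C)) - 1)"
  proof (rule sum_mono)
    fix j
    show "int (fdim ((\<lambda>a. y a j) ` S)) - 1 \<le> int (fdim ((\<lambda>a. y a j) ` C)) - 1"
      using fdim_subset[OF finite_imageI[OF assms(1), of "\<lambda>a. y a j"] image_mono[OF assms(5)]]
      by simp
  qed
  also have "\<dots> = int (\<Sum>j\<in>{1..m}. fdim ((\<lambda>a. y a j) ` C)) - int m"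
    by (simp add: sum_subtractf)
  finally show ?thesis
    using assms(6) fdim_ptensor_span_connected[OF assms(1-4)] by linarith
qed

section \<open>Product tensors in the span\<close>

lemma ptensor_fscale:
  assumes "1 \<le> m"
  shows "ptensor m (z(1 := fscale c (z 1))) = fscale c (ptensor m z)"
proof
  fix \<iota>
  let ?z' = "z(1 := fscale c (z 1))"
  have one: "1 \<in> {1..m}"
    using assms by simp
  have "ptensor m ?z' \<iota> = ?z' 1 (\<iota> 1) * (\<Prod>j\<in>{1..m} - {1}. ?z' j (\<iota> j))"
    unfolding ptensor_def by (rule prod.remove[OF _ one]) simp
  also have "(\<Prod>j\<in>{1..m} - {1}. ?z' j (\<iota> j)) = (\<Prod>j\<in>{1..m} - {1}. z j (\<iota> j))"
    by (intro prod.cong) auto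
  also have "?z' 1 (\<iota> 1) * (\<Prod>j\<in>{1..m} - {1}. z j (\<iota> j)) = c * ptensor m z \<iota>"
    unfolding ptensor_def prod.remove[OF _ one, of "\<lambda>j. z j (\<iota> j)", OF finite_atLeastAtMost]
    by (simp add: fscale_apply)
  finally show "ptensor m ?z' \<iota> = fscale c (ptensor m z) \<iota>"
    by (simp only: fscale_apply[of c "ptensor m z" \<iota>])
qed

lemma is_product_tensor_fscale:
  assumes "1 \<le> m" "c \<noteq> 0" "ptensor m z \<noteq> 0"
  shows "is_product_tensor m (fscale c (ptensor m z))"
  unfolding is_product_tensor_def
  using ptensor_fscale[OF assms(1)] assms(2,3) by (metis fs.scale_eq_0_iff)

lemma sum_fdim_factors_lt_card_if_minimal:
  fixes x :: "'e \<Rightarrow> nat \<Rightarrow> 'i \<Rightarrow> 'f::field"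
  assumes "finite S" "\<forall>a\<in>S. ptensor m (x a) \<noteq> 0" "ptensor m z \<noteq> 0"
    and "ptensor m z \<in> fspan ((\<lambda>a. ptensor m (x a)) ` S)"
    and "\<forall>S'\<subset>S. ptensor m z \<notin> fspan ((\<lambda>a. ptensor m (x a)) ` S')"
  shows "(\<Sum>j\<in>{1..m}. int (fdim ((\<lambda>a. x a j) ` S)) - 1) < int (card S)"
proof (rule ccontr)
  assume "\<not> ?thesis"
  then have bound: "int (card S) \<le> (\<Sum>j\<in>{1..m}. int (fdim ((\<lambda>a. x a j) ` S)) - 1)"
    by simp
  let ?X = "\<lambda>a. ptensor m (x a)"
  define y where "y = case_option z x"
  let ?Y = "\<lambda>k. ptensor m (y k)"
  have Y_None: "?Y None = ptensor m z"
    by (simp add: y_def)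
  have Y_Some: "?Y ` Some ` S' = ?X ` S'" for S'
    by (auto simp: y_def image_image)
  have "span_connected ?Y (insert None (Some ` S))"
  proof (rule span_connected_insert_minimal)
    show "?Y None \<in> fspan (?Y ` Some ` S)"
      using assms(4) unfolding Y_Some Y_None .
    show "\<forall>S'\<subset>Some ` S. ?Y None \<notin> fspan (?Y ` S')"
    proof (intro allI impI)
      fix S' assume "S' \<subset> Some ` S"
      then have S': "S' = Some ` (Some -` S')" "Some -` S' \<subset> S"
        by auto
      have "?Y ` S' = ?Y ` Some ` (Some -` S')"
        using S'(1) by (rule arg_cong)
      then show "?Y None \<notin> fspan (?Y ` S')"
        using assms(5) S'(2) unfolding Y_Some Y_None by simp
    qed
  qed (use assms(1) in auto)
  moreover have "\<forall>k\<in>insert None (Some ` S). ?Y k \<noteq> 0"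
    using assms(2,3) by (auto simp: y_def)
  moreover have "int (card (Some ` S)) \<le> (\<Sum>j\<in>{1..m}. int (fdim ((\<lambda>k. y k j) ` Some ` S)) - 1)"
    using bound by (simp add: card_image y_def image_image)
  ultimately have "card (Some ` S) < fdim (?Y ` insert None (Some ` S))"
    using card_lt_fdim_ptensor_if_span_connected[of "insert None (Some ` S)"] assms(1) by blast
  also have "\<dots> = fdim (?X ` S)"
    unfolding image_insert Y_Some Y_None using assms(4) by (rule fdim_insert_in_span)
  also have "\<dots> \<le> card (?X ` S)"
    using fs.dim_le_card'[OF finite_imageI[OF assms(1)]] .
  also have "\<dots> \<le> card S"
    using card_image_le[OF assms(1)] .
  finally show False
    by (simp add: card_image)
qed

lemma product_tensor_in_span_imp_multiple:
  fixes x :: "'e \<Rightarrow> nat \<Rightarrow> 'i \<Rightarrow> 'f::field"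
  assumes "finite N" "\<forall>a\<in>N. ptensor m (x a) \<noteq> 0"
    and cond: "\<forall>S\<subseteq>N. 2 \<le> card S \<longrightarrow>
      int (card S) \<le> (\<Sum>j\<in>{1..m}. int (fdim ((\<lambda>a. x a j) ` S)) - 1)"
    and "is_product_tensor m t" "t \<in> fspan ((\<lambda>a. ptensor m (x a)) ` N)"
  shows "\<exists>a\<in>N. \<exists>c. c \<noteq> 0 \<and> t = fscale c (ptensor m (x a))"
proof -
  let ?X = "\<lambda>a. ptensor m (x a)"
  obtain z where t: "t = ptensor m z" "t \<noteq> 0"
    using assms(4) unfolding is_product_tensor_def by blast
  obtain S where S: "S \<subseteq> N" "t \<in> fspan (?X ` S)" and minimal: "\<forall>S'\<subset>S. t \<notin> fspan (?X ` S')"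
    using minimal_fspan_subset_exists[OF assms(1,5)] by blast
  have fin_S: "finite S"
    using S(1) assms(1) by (rule finite_subset)
  have "\<forall>a\<in>S. ?X a \<noteq> 0"
    using assms(2) S(1) by blast
  then have lt: "(\<Sum>j\<in>{1..m}. int (fdim ((\<lambda>a. x a j) ` S)) - 1) < int (card S)"
    using sum_fdim_factors_lt_card_if_minimal[OF fin_S _ _ S(2)[unfolded t(1)] minimal[unfolded t(1)]]
      t by simp
  have "\<not> 2 \<le> card S"
  proof
    assume "2 \<le> card S"
    then have "int (card S) \<le> (\<Sum>j\<in>{1..m}. int (fdim ((\<lambda>a. x a j) ` S)) - 1)"
      using cond S(1) by blast
    then show False
      using lt by linarith
  qed
  moreover have "card S \<noteq> 0"
    using S(2) t(2) fin_S by auto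
  ultimately have "card S = 1"
    by linarith
  then obtain a where "S = {a}"
    by (rule card_1_singletonE)
  then obtain c where "t = fscale c (?X a)"
    using S(2) by (auto simp: fs.span_singleton)
  moreover have "c \<noteq> 0"
    using t(2) calculation by auto
  ultimately show ?thesis
    using S(1) \<open>S = {a}\<close> by blast
qed

lemma ptensor_not_in_fspan_ptensor:
  fixes x :: "'e \<Rightarrow> nat \<Rightarrow> 'i \<Rightarrow> 'f::field"
  assumes "a \<noteq> b" "ptensor m (x a) \<noteq> 0" "ptensor m (x b) \<noteq> 0"
    and "int (card {a, b}) \<le> (\<Sum>j\<in>{1..m}. int (fdim ((\<lambda>c. x c j) ` {a, b})) - 1)"
  shows "ptensor m (x a) \<notin> fspan {ptensor m (x b)}"
proof
  let ?X = "\<lambda>c. ptensor m (x c)"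
  assume a_in: "?X a \<in> fspan {?X b}"
  have "span_connected ?X (insert a {b})"
    using assms(1,2) a_in by (intro span_connected_insert_minimal) (auto simp: subset_singleton_iff)
  then have "card {a, b} < fdim (?X ` {a, b})"
    using card_lt_fdim_ptensor_if_span_connected[of "{a, b}" m x "{a, b}"] assms(2-4) by auto
  also have "\<dots> = fdim {?X b}"
    using fdim_insert_in_span[OF a_in] by simp
  also have "\<dots> \<le> 1"
    using fs.dim_le_card'[of "{?X b}"] by simp
  finally show False
    using assms(1) by simp
qed

theorem corollary7p6:
  fixes n m :: nat and x :: "nat \<Rightarrow> nat \<Rightarrow> ('i \<Rightarrow> 'f::field)"
  assumes "n \<ge> 2" and "m \<ge> 2"
    and prod: "\<forall>a\<in>{1..n}. ptensor m (x a) \<noteq> 0"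
    and cond: "\<forall>S\<subseteq>{1..n}. 2 \<le> card S \<longrightarrow>
                 int (card S) \<le> (\<Sum>j\<in>{1..m}. int (fdim ((\<lambda>a. x a j) ` S)) - 1)"
  shows "{t. is_product_tensor m t \<and> t \<in> fspan ((\<lambda>a. ptensor m (x a)) ` {1..n})}
           = (\<Union>a\<in>{1..n}. {fscale c (ptensor m (x a)) | c. c \<noteq> 0})
       \<and> (\<forall>a\<in>{1..n}. \<forall>b\<in>{1..n}. a \<noteq> b \<longrightarrow>
           {fscale c (ptensor m (x a)) | c. c \<noteq> 0} \<inter> {fscale c (ptensor m (x b)) | c. c \<noteq> 0} = {})"
proof -
  let ?X = "\<lambda>a. ptensor m (x a)"
  have "{t. is_product_tensor m t \<and> t \<in> fspan (?X ` {1..n})}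
      \<subseteq> (\<Union>a\<in>{1..n}. {fscale c (?X a) | c. c \<noteq> 0})"
    using product_tensor_in_span_imp_multiple[OF _ prod cond] by fastforce
  moreover have "fscale c (?X a) \<in> {t. is_product_tensor m t \<and> t \<in> fspan (?X ` {1..n})}"
    if "a \<in> {1..n}" "c \<noteq> 0" for a c
    using is_product_tensor_fscale[of m c "x a"] fs.span_scale[OF fs.span_base[OF imageI[OF that(1)]]]
      assms(2) prod that by auto
  moreover have "?X a \<notin> fspan {?X b}" if "a \<in> {1..n}" "b \<in> {1..n}" "a \<noteq> b" for a b
    using ptensor_not_in_fspan_ptensor[of a b m x] cond[rule_format, of "{a, b}"] prod that by auto
  ultimately show ?thesis
    using in_fspan_singleton_if_fscale_eq by blast
qed

end
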